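(* Assume that $K$ is a field and $M$ is an asymptotic scale. (1) Let $F \in K((M))^{\text{ls}}$ be nonzero. Then there are a nonzero $a \in K$ and an $E \in K[[M]]^{\text{ls}}$ such that $\operatorname{lm}(E)$ is small and $F = a \operatorname{lm}(F) (1-E)$. (2) $K((M))^{\text{ls}}$ is the fraction field of $K[[M]]^{\text{ps}}$ in $K((M))$.
   Context: Let $\mathcal{H}$ be the Hardy field of all germs at $+\infty$ of unary functions definable in the o-minimal structure $\mathbb{R}_{\text{an},\exp}$, and $\mathcal{H}^{>0}=\{h\in\mathcal{H}: h>0\}$. Let $M$ be a multiplicative $\mathbb{R}$-vector subspace of $\mathcal{H}^{>0}$ and $K$ a commutative ring of characteristic 0 with unit. A germ is small if it tends to $0$ at $+\infty$. For germs $f,g$, $f\preceq g$ means $f=O(g)$ and $f\asymp g$ means $f\preceq g$ and $g\preceq f$. $M$ is an asymptotic scale if, for $m\in M$, $m\asymp 1$ implies $m=1$. $K((M))$ denotes the ring of generalized series $\sum_{m\in M} a_m m$ with $a_m\in K$ and reverse-well-ordered support $\{m: a_m\neq 0\}$; $\operatorname{lm}(F)$ denotes the leading (largest) monomial of the support of $F$. A generalized power series over $K$ is a series $G=\sum_{\alpha\in[0,\infty)^{k+1}} a_\alpha X^\alpha$ in $X=(X_0,\dots,X_k)$ whose support is contained in a cartesian product of well-ordered subsets of $\mathbb{R}$; its support is natural if for every $a>0$ each coordinate projection of the support meets $[0,a)$ in a finite set. An $M$-generalized power series over $K$ is a series $G(m_0,\dots,m_k)$ with $G$ a generalized power series over $K$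 with natural support and $m_0,\dots,m_k\in M$ small; $K[[M]]^{\text{ps}}$ denotes the subring of $K((M))$ of all such series. An $M$-generalized Laurent series is a series $nF$ with $F$ an $M$-generalized power series with generating monomials $m_0,\dots,m_k$ and $n$ in the multiplicative $\mathbb{R}$-vector space generated by $m_0,\dots,m_k$; $K((M))^{\text{ls}}$ denotes the subring of $K((M))$ of all $M$-generalized Laurent series. *)

theory Defs
  imports Complex_Main
begin

definition germ_eq :: "(real \<Rightarrow> real) \<Rightarrow> (real \<Rightarrow> real) \<Rightarrow> bool" where
  "germ_eq f g \<longleftrightarrow> eventually (\<lambda>x. f x = g x) at_top"

lemma germ_eq_equivp: "equivp germ_eq"
proof (rule equivpI)
  show "reflp germ_eq" by (rule reflpI) (simp add: germ_eq_def)
  show "symp germ_eq" by (rule sympI) (auto simp: germ_eq_def elim: eventually_mono)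
  show "transp germ_eq"
    by (rule transpI) (auto simp: germ_eq_def elim: eventually_elim2)
qed

quotient_type germ = "real \<Rightarrow> real" / germ_eq
  by (rule germ_eq_equivp)

instantiation germ :: comm_monoid_mult
begin
lift_definition times_germ :: "germ \<Rightarrow> germ \<Rightarrow> germ" is "\<lambda>f g x. f x * g x"
  by (auto simp: germ_eq_def elim: eventually_elim2)
lift_definition one_germ :: germ is "\<lambda>x. 1" .
instance
proof
  fix a b c :: germ
  show "a * b * c = a * (b * c)" by transfer (simp add: germ_eq_def mult.assoc)
  show "a * b = b * a" by transfer (simp add: germ_eq_def mult.commute)
  show "1 * a = a" by transfer (simp add: germ_eq_def)
qed
end

text \<open>Real power of a germ (the R-vector space structure of a multiplicative group of
  positive germs).\<close>
lift_definition gpowr :: "germ \<Rightarrow> real \<Rightarrow> germ" is "\<lambda>f r x. f x powr r"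
  by (auto simp: germ_eq_def elim: eventually_mono)

lift_definition gpos :: "germ \<Rightarrow> bool" is "\<lambda>f. eventually (\<lambda>x. f x > 0) at_top"
proof -
  fix f g :: "real \<Rightarrow> real"
  assume "germ_eq f g"
  then have e: "eventually (\<lambda>x. f x = g x) at_top" unfolding germ_eq_def .
  show "eventually (\<lambda>x. f x > 0) at_top = eventually (\<lambda>x. g x > 0) at_top"
    by (rule eventually_subst) (rule eventually_mono[OF e], simp)
qed

lift_definition gsmall :: "germ \<Rightarrow> bool" is "\<lambda>f. (f \<longlongrightarrow> 0) at_top"
proof -
  fix f g :: "real \<Rightarrow> real"
  assume "germ_eq f g"
  then have e: "eventually (\<lambda>x. f x = g x) at_top" unfolding germ_eq_def .
  show "(f \<longlongrightarrow> 0) at_top = (g \<longlongrightarrow> 0) at_top"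
    by (rule tendsto_cong[OF e])
qed

lift_definition gle :: "germ \<Rightarrow> germ \<Rightarrow> bool" (infix "\<preceq>" 50)
  is "\<lambda>f g. \<exists>c. eventually (\<lambda>x. \<bar>f x\<bar> \<le> c * \<bar>g x\<bar>) at_top"
proof -
  fix f1 f2 g1 g2 :: "real \<Rightarrow> real"
  assume "germ_eq f1 f2" "germ_eq g1 g2"
  then have e: "eventually (\<lambda>x. f1 x = f2 x \<and> g1 x = g2 x) at_top"
    unfolding germ_eq_def by (auto elim: eventually_elim2)
  show "(\<exists>c. eventually (\<lambda>x. \<bar>f1 x\<bar> \<le> c * \<bar>g1 x\<bar>) at_top) =
        (\<exists>c. eventually (\<lambda>x. \<bar>f2 x\<bar> \<le> c * \<bar>g2 x\<bar>) at_top)"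
  proof
    assume "\<exists>c. eventually (\<lambda>x. \<bar>f1 x\<bar> \<le> c * \<bar>g1 x\<bar>) at_top"
    then obtain c where "eventually (\<lambda>x. \<bar>f1 x\<bar> \<le> c * \<bar>g1 x\<bar>) at_top" by blast
    with e have "eventually (\<lambda>x. \<bar>f2 x\<bar> \<le> c * \<bar>g2 x\<bar>) at_top"
      by (auto elim: eventually_elim2)
    then show "\<exists>c. eventually (\<lambda>x. \<bar>f2 x\<bar> \<le> c * \<bar>g2 x\<bar>) at_top" by blast
  next
    assume "\<exists>c. eventually (\<lambda>x. \<bar>f2 x\<bar> \<le> c * \<bar>g2 x\<bar>) at_top"
    then obtain c where "eventually (\<lambda>x. \<bar>f2 x\<bar> \<le> c * \<bar>g2 x\<bar>) at_top" by blast
    with e have "eventually (\<lambda>x. \<bar>f1 x\<bar> \<le> c * \<bar>g1 x\<bar>) at_top"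
      by (auto elim: eventually_elim2)
    then show "\<exists>c. eventually (\<lambda>x. \<bar>f1 x\<bar> \<le> c * \<bar>g1 x\<bar>) at_top" by blast
  qed
qed

definition gasymp :: "germ \<Rightarrow> germ \<Rightarrow> bool" (infix "\<asymp>" 50) where
  "f \<asymp> g \<longleftrightarrow> f \<preceq> g \<and> g \<preceq> f"

text \<open>Hardy-type behaviour of a germ: it tends to 0, to +infinity, or to a positive
  real limit (this is what every positive germ in a Hardy field satisfies).\<close>
lift_definition ghardy_limit :: "germ \<Rightarrow> bool"
  is "\<lambda>f. (f \<longlongrightarrow> 0) at_top \<or> filterlim f at_top at_top \<or> (\<exists>c>0. (f \<longlongrightarrow> c) at_top)"
proof -
  fix f g :: "real \<Rightarrow> real"
  assume "germ_eq f g"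
  then have e: "eventually (\<lambda>x. f x = g x) at_top" unfolding germ_eq_def .
  have 1: "\<And>F. filterlim f F at_top = filterlim g F at_top"
    using e by (rule filterlim_cong[OF refl refl])
  show "((f \<longlongrightarrow> 0) at_top \<or> filterlim f at_top at_top \<or> (\<exists>c>0. (f \<longlongrightarrow> c) at_top)) =
        ((g \<longlongrightarrow> 0) at_top \<or> filterlim g at_top at_top \<or> (\<exists>c>0. (g \<longlongrightarrow> c) at_top))"
    by (simp only: 1)
qed

definition mult_R_subspace :: "germ set \<Rightarrow> bool" where
  "mult_R_subspace M \<longleftrightarrow>
     1 \<in> M \<and> (\<forall>m\<in>M. \<forall>n\<in>M. m * n \<in> M) \<and> (\<forall>m\<in>M. \<forall>r::real. gpowr m r \<in> M) \<and>
     (\<forall>m\<in>M. gpos m \<and> ghardy_limit m)"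

definition asymptotic_scale :: "germ set \<Rightarrow> bool" where
  "asymptotic_scale M \<longleftrightarrow> (\<forall>m\<in>M. m \<asymp> 1 \<longrightarrow> m = 1)"

text \<open>A generalized series is a coefficient function on germs; support in M and
  reverse-well-ordered (w.r.t. the dominance order): every nonempty subset of the
  support has a largest element.\<close>
definition supp :: "(germ \<Rightarrow> 'k::zero) \<Rightarrow> germ set" where
  "supp F = {m. F m \<noteq> 0}"

definition is_series :: "germ set \<Rightarrow> (germ \<Rightarrow> 'k::zero) \<Rightarrow> bool" where
  "is_series M F \<longleftrightarrow> supp F \<subseteq> M \<and>
     (\<forall>S \<subseteq> supp F. S \<noteq> {} \<longrightarrow> (\<exists>m\<in>S. \<forall>n\<in>S. n \<preceq> m))"

definition series_set :: "germ set \<Rightarrow> (germ \<Rightarrow> 'k::zero) set" where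
  "series_set M = {F. is_series M F}"

definition lm :: "(germ \<Rightarrow> 'k::zero) \<Rightarrow> germ" where
  "lm F = (THE m. F m \<noteq> 0 \<and> (\<forall>n. F n \<noteq> 0 \<longrightarrow> n \<preceq> m))"

definition mono_ser :: "'k::zero \<Rightarrow> germ \<Rightarrow> germ \<Rightarrow> 'k" where
  "mono_ser a m = (\<lambda>n. if n = m then a else 0)"

definition one_ser :: "germ \<Rightarrow> 'k::{zero,one}" where
  "one_ser = mono_ser 1 1"

definition ser_mult :: "(germ \<Rightarrow> 'k::comm_ring_1) \<Rightarrow> (germ \<Rightarrow> 'k) \<Rightarrow> germ \<Rightarrow> 'k" where
  "ser_mult F G = (\<lambda>m. \<Sum>(p, q) \<in> {(p, q). F p \<noteq> 0 \<and> G q \<noteq> 0 \<and> p * q = m}. F p * G q)"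

text \<open>Exponent vectors in k+1 variables: functions nat => real, nonnegative on
  indices 0..k and 0 beyond k.\<close>
definition well_ordered_real :: "real set \<Rightarrow> bool" where
  "well_ordered_real W \<longleftrightarrow> (\<forall>S \<subseteq> W. S \<noteq> {} \<longrightarrow> (\<exists>x\<in>S. \<forall>y\<in>S. x \<le> y))"

definition gen_power_series :: "nat \<Rightarrow> ((nat \<Rightarrow> real) \<Rightarrow> 'k::zero) \<Rightarrow> bool" where
  "gen_power_series k G \<longleftrightarrow>
     (\<forall>\<alpha>. G \<alpha> \<noteq> 0 \<longrightarrow> (\<forall>i\<le>k. 0 \<le> \<alpha> i) \<and> (\<forall>i>k. \<alpha> i = 0)) \<and>
     (\<exists>W :: nat \<Rightarrow> real set. (\<forall>i\<le>k. well_ordered_real (W i)) \<and>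
        (\<forall>\<alpha>. G \<alpha> \<noteq> 0 \<longrightarrow> (\<forall>i\<le>k. \<alpha> i \<in> W i)))"

definition natural_support :: "nat \<Rightarrow> ((nat \<Rightarrow> real) \<Rightarrow> 'k::zero) \<Rightarrow> bool" where
  "natural_support k G \<longleftrightarrow>
     (\<forall>a>0. \<forall>i\<le>k. finite ({\<alpha> i | \<alpha>. G \<alpha> \<noteq> 0} \<inter> {0..<a}))"

definition monom :: "nat \<Rightarrow> (nat \<Rightarrow> germ) \<Rightarrow> (nat \<Rightarrow> real) \<Rightarrow> germ" where
  "monom k m \<alpha> = (\<Prod>i\<le>k. gpowr (m i) (\<alpha> i))"

text \<open>The series G(m_0,...,m_k) in K((M)).\<close>
definition gps_eval :: "nat \<Rightarrow> ((nat \<Rightarrow> real) \<Rightarrow> 'k::comm_ring_1) \<Rightarrow> (nat \<Rightarrow> germ) \<Rightarrow> germ \<Rightarrow> 'k" where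
  "gps_eval k G m = (\<lambda>n. \<Sum>\<alpha> \<in> {\<alpha>. G \<alpha> \<noteq> 0 \<and> monom k m \<alpha> = n}. G \<alpha>)"

definition M_gps_data :: "germ set \<Rightarrow> nat \<Rightarrow> ((nat \<Rightarrow> real) \<Rightarrow> 'k::zero) \<Rightarrow> (nat \<Rightarrow> germ) \<Rightarrow> bool" where
  "M_gps_data M k G m \<longleftrightarrow> gen_power_series k G \<and> natural_support k G \<and>
     (\<forall>i\<le>k. m i \<in> M \<and> gsmall (m i))"

definition power_series_ring :: "germ set \<Rightarrow> (germ \<Rightarrow> 'k::comm_ring_1) set" where
  "power_series_ring M = {gps_eval k G m | k G m. M_gps_data M k G m}"

definition laurent_series_ring :: "germ set \<Rightarrow> (germ \<Rightarrow> 'k::comm_ring_1) set" where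
  "laurent_series_ring M =
     {ser_mult (mono_ser 1 (monom k m r)) (gps_eval k G m) | k G m r. M_gps_data M k G m}"

end

(*
  Every series in play is supported on a set c * g^\<Gamma> = {c * g^e | e \<in> \<Gamma>}, where g is a finite
  family of small generators in M and \<Gamma> a set of exponent vectors whose coordinate sets are
  natural (finite below every bound); conversely, a series supported on such a set is an
  M-generalized power series if c = 1 and a Laurent series if c = g^r. By Dickson's lemma
  these supports are reverse well ordered, so a nonzero Laurent series F has a leading
  monomial q, and (1) follows by dividing by the leading term: the quotient is supported on
  q^-1 * supp F, and its monomials other than 1 are below 1, hence small because M is an
  asymptotic scale.

  For (2), a Laurent series supported on g^r * g^\<Gamma> becomes a power series after
  multiplication by g^(max 0 (-r)). Conversely, let Q F = P with P, Q power series and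
  q = lm Q. By Dickson's lemma the monomials p = g^e \<noteq> q of Q satisfy p / q = g^(e - \<phi>) * n\<^sub>\<phi>
  with n\<^sub>\<phi> = g^\<phi> / q for one of finitely many \<phi> \<le> e, and n\<^sub>\<phi> is small. Adding the n\<^sub>\<phi> as
  generators gives an additively closed exponent set \<Gamma> with supp P \<subseteq> g^\<Gamma> and p / q \<in> g^\<Gamma>.
  Then supp F \<subseteq> q^-1 * g^\<Gamma>: otherwise the largest monomial u of F outside this set would
  contribute Q(q) F(u) \<noteq> 0 to the coefficient of P at q u, and no other product does.
*)
theory Submission
  imports Defs "HOL-Library.Landau_Symbols" "HOL-Library.Set_Algebras"
begin

section \<open>Germs\<close>

lemma gpowr_add: "gpos m \<Longrightarrow> gpowr m a * gpowr m b = gpowr m (a + b)"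
  by transfer (auto simp: germ_eq_def powr_add elim!: eventually_mono)

lemma gpowr_zero: "gpos m \<Longrightarrow> gpowr m 0 = 1"
  by transfer (auto simp: germ_eq_def elim!: eventually_mono)

lemma gpowr_one: "gpos m \<Longrightarrow> gpowr m 1 = m"
  by transfer (auto simp: germ_eq_def elim!: eventually_mono)

lemma gpowr_sum: "gpos m \<Longrightarrow> (\<Prod>i\<in>I. gpowr m (f i)) = gpowr m (\<Sum>i\<in>I. f i)"
  by (induction I rule: infinite_finite_induct) (auto simp: gpowr_zero gpowr_add)

lemma mult_gpowr_minus_one: "gpos m \<Longrightarrow> m * gpowr m (-1) = 1"
  using gpowr_add[of m 1 "-1"] by (simp add: gpowr_one gpowr_zero)

lemma gpos_one: "gpos 1"
  by transfer simp

lemma gpos_mult: "gpos a \<Longrightarrow> gpos b \<Longrightarrow> gpos (a * b)"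
  by transfer (auto elim: eventually_elim2)

lemma gpos_gpowr: "gpos a \<Longrightarrow> gpos (gpowr a r)"
  by transfer (auto elim: eventually_mono)

lemma gpos_prod: "(\<And>x. x \<in> S \<Longrightarrow> gpos (f x)) \<Longrightarrow> gpos (\<Prod>x\<in>S. f x)"
  by (induction S rule: infinite_finite_induct) (auto simp: gpos_one gpos_mult)

lemma gpos_mult_left_cancel: "gpos c \<Longrightarrow> c * x = c * y \<Longrightarrow> x = y"
  by (metis mult_gpowr_minus_one mult.assoc mult.commute mult_1_left)

lemma gpos_mult_inverse_left: "gpos c \<Longrightarrow> c * (gpowr c (-1) * u) = u"
  by (simp add: mult_gpowr_minus_one mult.assoc[symmetric])

lemma gpos_inverse_mult_left: "gpos c \<Longrightarrow> gpowr c (-1) * (c * u) = u"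
  by (simp add: mult_gpowr_minus_one mult.assoc[symmetric] mult.commute[of "gpowr c (-1)"])

lemma gle_iff_bigo:
  fixes f g :: "real \<Rightarrow> real"
  shows "(\<exists>c. \<forall>\<^sub>F x in at_top. \<bar>f x\<bar> \<le> c * \<bar>g x\<bar>) \<longleftrightarrow> f \<in> O(g)"
  by (auto elim!: landau_o.bigE)

lemma gle_refl [simp]: "a \<preceq> a"
  by transfer (simp add: gle_iff_bigo)

lemma gle_trans [trans]: "a \<preceq> b \<Longrightarrow> b \<preceq> c \<Longrightarrow> a \<preceq> c"
  by transfer (auto simp: gle_iff_bigo intro: landau_o.big_trans)

lemma gle_mult: "a \<preceq> b \<Longrightarrow> c \<preceq> d \<Longrightarrow> a * c \<preceq> b * d"
  by transfer (auto simp: gle_iff_bigo intro: landau_o.big.mult)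

lemma gle_mult_right: "a \<preceq> b \<Longrightarrow> a * c \<preceq> b * c"
  using gle_mult gle_refl by blast

lemma gle_mult_cancel_left: "gpos c \<Longrightarrow> c * a \<preceq> c * b \<Longrightarrow> a \<preceq> b"
  using gle_mult[OF gle_refl, of "c * a" "c * b" "gpowr c (-1)"] by (simp add: gpos_inverse_mult_left)

lemma prod_gle_one: "(\<And>x. x \<in> S \<Longrightarrow> f x \<preceq> 1) \<Longrightarrow> (\<Prod>x\<in>S. f x) \<preceq> 1"
proof (induction S rule: infinite_finite_induct)
  case (insert x F)
  then show ?case using gle_mult[of "f x" 1 "prod f F" 1] by simp
qed simp_all

lemma gsmall_neq_one: "gsmall m \<Longrightarrow> m \<noteq> 1"
proof
  assume "gsmall m" "m = 1"
  then have "gsmall 1" by simp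
  then show False by transfer (simp add: tendsto_const_iff)
qed

lemma gsmall_gpowr_gle_one: "gsmall m \<Longrightarrow> gpos m \<Longrightarrow> a \<ge> 0 \<Longrightarrow> gpowr m a \<preceq> 1"
proof transfer
  fix f :: "real \<Rightarrow> real" and a :: real
  assume "(f \<longlongrightarrow> 0) at_top" "\<forall>\<^sub>F x in at_top. 0 < f x" "a \<ge> 0"
  then have "\<forall>\<^sub>F x in at_top. \<bar>f x powr a\<bar> \<le> 1 * \<bar>1\<bar>"
    by (auto elim!: eventually_elim2[OF order_tendstoD(2)[of f 0 at_top 1]] intro!: powr_le1)
  then show "\<exists>c. \<forall>\<^sub>F x in at_top. \<bar>f x powr a\<bar> \<le> c * \<bar>1\<bar>" by blast
qed

lemma gsmall_gle_one: "gsmall m \<Longrightarrow> gpos m \<Longrightarrow> m \<preceq> 1"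
  using gsmall_gpowr_gle_one[of m 1] by (simp add: gpowr_one)

lemma ghardy_limit_gle_total:
  assumes "gpos m" "gpos n" "ghardy_limit (m * gpowr n (-1))"
  shows "m \<preceq> n \<or> n \<preceq> m"
  using assms
proof transfer
  fix f g :: "real \<Rightarrow> real"
  assume pos: "\<forall>\<^sub>F x in at_top. 0 < f x" "\<forall>\<^sub>F x in at_top. 0 < g x"
    and lim: "((\<lambda>x. f x * g x powr - 1) \<longlongrightarrow> 0) at_top \<or>
      filterlim (\<lambda>x. f x * g x powr - 1) at_top at_top \<or>
      (\<exists>c>0. ((\<lambda>x. f x * g x powr - 1) \<longlongrightarrow> c) at_top)"
  have "\<forall>\<^sub>F x in at_top. f x * g x powr - 1 = f x / g x"
    using pos(2) by eventually_elim (simp add: powr_minus divide_inverse)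
  then have "filterlim (\<lambda>x. f x * g x powr - 1) F at_top \<longleftrightarrow> filterlim (\<lambda>x. f x / g x) F at_top"
    for F by (rule filterlim_cong[OF refl refl])
  then have quot: "filterlim (\<lambda>x. f x / g x) at_top at_top \<or> (\<exists>c. ((\<lambda>x. f x / g x) \<longlongrightarrow> c) at_top)"
    using lim by auto
  have "f \<in> O(g) \<or> g \<in> O(f)"
  proof (cases "filterlim (\<lambda>x. f x / g x) at_top at_top")
    case True
    then have "((\<lambda>x. inverse (f x / g x)) \<longlongrightarrow> 0) at_top"
      by (rule tendsto_inverse_0_at_top)
    then have "((\<lambda>x. g x / f x) \<longlongrightarrow> 0) at_top" by simp
    then have "g \<in> O(f)" using pos(1) by (auto intro!: bigoI_tendsto elim: eventually_mono)
    then show ?thesis ..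
  next
    case False
    then obtain c where "((\<lambda>x. f x / g x) \<longlongrightarrow> c) at_top" using quot by blast
    then have "f \<in> O(g)" using pos(2) by (auto intro!: bigoI_tendsto elim: eventually_mono)
    then show ?thesis ..
  qed
  then show "(\<exists>c. \<forall>\<^sub>F x in at_top. \<bar>f x\<bar> \<le> c * \<bar>g x\<bar>) \<or> (\<exists>c. \<forall>\<^sub>F x in at_top. \<bar>g x\<bar> \<le> c * \<bar>f x\<bar>)"
    by (simp add: gle_iff_bigo)
qed

lemma ghardy_limit_gle_one:
  assumes "gpos m" "ghardy_limit m" "m \<preceq> 1"
  shows "gsmall m \<or> 1 \<preceq> m"
  using assms
proof transfer
  fix f :: "real \<Rightarrow> real"
  assume pos: "\<forall>\<^sub>F x in at_top. 0 < f x"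
    and lim: "(f \<longlongrightarrow> 0) at_top \<or> filterlim f at_top at_top \<or> (\<exists>c>0. (f \<longlongrightarrow> c) at_top)"
    and "\<exists>c. \<forall>\<^sub>F x in at_top. \<bar>f x\<bar> \<le> c * \<bar>1\<bar>"
  then obtain C where C: "\<forall>\<^sub>F x in at_top. \<bar>f x\<bar> \<le> C" by auto
  have "\<not> filterlim f at_top at_top"
  proof
    assume "filterlim f at_top at_top"
    then have "\<forall>\<^sub>F x in at_top. f x \<ge> C + 1" by (simp add: filterlim_at_top)
    with C have "\<forall>\<^sub>F x in at_top. \<bar>f x\<bar> \<le> C \<and> C + 1 \<le> f x" by (rule eventually_conj)
    then show False by (auto dest: eventually_happens)
  qed
  moreover have "(\<lambda>_. 1) \<in> O(f)" if "c > 0" "(f \<longlongrightarrow> c) at_top" for c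
  proof (rule bigoI_tendsto)
    show "((\<lambda>x. 1 / f x) \<longlongrightarrow> 1 / c) at_top" using that by (intro tendsto_intros) auto
    show "\<forall>\<^sub>F x in at_top. f x \<noteq> 0" using pos by (auto elim: eventually_mono)
  qed
  ultimately have "(f \<longlongrightarrow> 0) at_top \<or> (\<lambda>_. 1) \<in> O(f)"
    using lim by blast
  then show "(f \<longlongrightarrow> 0) at_top \<or> (\<exists>c. \<forall>\<^sub>F x in at_top. \<bar>1\<bar> \<le> c * \<bar>f x\<bar>)"
    by (simp add: gle_iff_bigo[of "\<lambda>_. 1" f, symmetric])
qed

section \<open>Monomials in finitely many generators\<close>

definition monom_on :: "germ set \<Rightarrow> (germ \<Rightarrow> real) \<Rightarrow> germ" where
  "monom_on Gs e = (\<Prod>g\<in>Gs. gpowr g (e g))"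

lemma monom_on_cong: "(\<And>g. g \<in> Gs \<Longrightarrow> e g = e' g) \<Longrightarrow> monom_on Gs e = monom_on Gs e'"
  unfolding monom_on_def by (rule prod.cong) auto

lemma gpos_monom_on: "(\<And>g. g \<in> Gs \<Longrightarrow> gpos g) \<Longrightarrow> gpos (monom_on Gs e)"
  unfolding monom_on_def by (intro gpos_prod gpos_gpowr)

context
  fixes Gs :: "germ set"
  assumes gpos_Gs: "\<And>g. g \<in> Gs \<Longrightarrow> gpos g"
begin

lemma monom_on_add: "monom_on Gs (\<lambda>g. e g + f g) = monom_on Gs e * monom_on Gs f"
  unfolding monom_on_def prod.distrib[symmetric] by (rule prod.cong) (auto simp: gpowr_add gpos_Gs)

lemma monom_on_zero: "monom_on Gs (\<lambda>_. 0) = 1"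
  unfolding monom_on_def by (simp add: gpowr_zero gpos_Gs)

lemma monom_on_uminus: "monom_on Gs (\<lambda>g. - e g) * monom_on Gs e = 1"
  using monom_on_add[of "\<lambda>g. - e g" e] by (simp add: monom_on_zero)

lemma monom_on_indicator:
  assumes "finite Gs" "g \<in> Gs"
  shows "monom_on Gs (\<lambda>h. if h = g then 1 else 0) = g"
proof -
  have "monom_on Gs (\<lambda>h. if h = g then 1 else 0) = (\<Prod>h\<in>Gs. if h = g then g else 1)"
    unfolding monom_on_def by (rule prod.cong) (auto simp: gpowr_one gpowr_zero gpos_Gs)
  then show ?thesis using assms by simp
qed

lemma monom_on_antimono:
  assumes "\<And>g. g \<in> Gs \<Longrightarrow> gsmall g \<and> \<phi> g \<le> e g"
  shows "monom_on Gs e \<preceq> monom_on Gs \<phi>"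
proof -
  have "monom_on Gs (\<lambda>g. e g - \<phi> g) \<preceq> 1"
    unfolding monom_on_def using assms gpos_Gs by (intro prod_gle_one gsmall_gpowr_gle_one) auto
  then have "monom_on Gs \<phi> * monom_on Gs (\<lambda>g. e g - \<phi> g) \<preceq> monom_on Gs \<phi> * 1"
    by (rule gle_mult[OF gle_refl])
  then show ?thesis using monom_on_add[of \<phi> "\<lambda>g. e g - \<phi> g"] by simp
qed

end

lemma monom_on_mono_neutral:
  assumes "finite Gs'" "Gs \<subseteq> Gs'" "\<And>g. g \<in> Gs' - Gs \<Longrightarrow> e g = 0" "\<And>g. g \<in> Gs' \<Longrightarrow> gpos g"
  shows "monom_on Gs' e = monom_on Gs e"
  unfolding monom_on_def using assms by (intro prod.mono_neutral_right) (auto simp: gpowr_zero)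

lemma gpowr_minus_one_monom_on:
  assumes "\<And>g. g \<in> Gs \<Longrightarrow> gpos g"
  shows "gpowr (monom_on Gs \<beta>) (-1) = monom_on Gs (\<lambda>g. - \<beta> g)"
proof -
  have "gpos (monom_on Gs \<beta>)" using assms by (rule gpos_monom_on)
  then have "monom_on Gs \<beta> * gpowr (monom_on Gs \<beta>) (-1) = monom_on Gs \<beta> * monom_on Gs (\<lambda>g. - \<beta> g)"
    using monom_on_uminus[of Gs \<beta>, OF assms] by (simp add: mult_gpowr_minus_one mult.commute)
  then show ?thesis by (rule gpos_mult_left_cancel[OF \<open>gpos (monom_on Gs \<beta>)\<close>])
qed

lemma monom_on_extend_inverse:
  assumes "finite Gs" "Gs' \<subseteq> Gs" "\<And>g. g \<in> Gs \<Longrightarrow> gpos g"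
  shows "monom_on Gs (\<lambda>g. if g \<in> Gs' then - \<beta> g else 0) = gpowr (monom_on Gs' \<beta>) (-1)"
proof -
  have "monom_on Gs (\<lambda>g. if g \<in> Gs' then - \<beta> g else 0) = monom_on Gs' (\<lambda>g. - \<beta> g)"
    using assms by (subst monom_on_mono_neutral[of Gs Gs']) (auto intro: monom_on_cong)
  also have "\<dots> = gpowr (monom_on Gs' \<beta>) (-1)"
    using assms by (intro gpowr_minus_one_monom_on[symmetric]) auto
  finally show ?thesis .
qed

lemma monom_on_times_image:
  assumes "\<And>g. g \<in> Gs \<Longrightarrow> gpos g"
  shows "monom_on Gs d *o monom_on Gs ` \<Gamma> = monom_on Gs ` (\<lambda>e g. d g + e g) ` \<Gamma>"
  unfolding elt_set_times_def image_image by (auto simp: monom_on_add[OF assms])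

lemma monom_on_image_mult_closed:
  assumes "\<And>g. g \<in> Gs \<Longrightarrow> gpos g" and add: "\<And>e d. e \<in> \<Gamma> \<Longrightarrow> d \<in> \<Gamma> \<Longrightarrow> (\<lambda>g. e g + d g) \<in> \<Gamma>"
    and "s \<in> monom_on Gs ` \<Gamma>" "t \<in> monom_on Gs ` \<Gamma>"
  shows "s * t \<in> monom_on Gs ` \<Gamma>"
proof -
  obtain e d where "e \<in> \<Gamma>" "d \<in> \<Gamma>" "s = monom_on Gs e" "t = monom_on Gs d" using assms(3,4) by blast
  moreover have "monom_on Gs (\<lambda>g. e g + d g) = monom_on Gs e * monom_on Gs d"
    using assms(1) by (rule monom_on_add)
  ultimately show ?thesis using add by (metis image_eqI)
qed

section \<open>Natural sets and Dickson's lemma\<close>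

definition natural_set :: "real set \<Rightarrow> bool" where
  "natural_set A \<longleftrightarrow> (\<forall>x\<in>A. 0 \<le> x) \<and> (\<forall>a. finite (A \<inter> {..<a}))"

lemma natural_set_subset: "natural_set A \<Longrightarrow> B \<subseteq> A \<Longrightarrow> natural_set B"
  unfolding natural_set_def by (meson Int_mono finite_subset order_refl subsetD)

lemma natural_set_Un: "natural_set A \<Longrightarrow> natural_set B \<Longrightarrow> natural_set (A \<union> B)"
  unfolding natural_set_def by (auto simp: Int_Un_distrib2)

lemma natural_set_UN: "finite I \<Longrightarrow> (\<And>i. i \<in> I \<Longrightarrow> natural_set (A i)) \<Longrightarrow> natural_set (\<Union>i\<in>I. A i)"
  by (induction I rule: finite_induct) (auto simp: natural_set_Un, simp add: natural_set_def)

lemma natural_set_finite: "finite A \<Longrightarrow> (\<And>x. x \<in> A \<Longrightarrow> 0 \<le> x) \<Longrightarrow> natural_set A"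
  unfolding natural_set_def by auto

lemma natural_set_plus:
  assumes "natural_set A" "natural_set B"
  shows "natural_set (A + B)"
  unfolding natural_set_def
proof (intro conjI ballI allI)
  fix z assume "z \<in> A + B"
  then show "0 \<le> z" using assms unfolding natural_set_def by (auto elim!: set_plus_elim)
next
  fix a :: real
  have "(A + B) \<inter> {..<a} \<subseteq> (A \<inter> {..<a}) + (B \<inter> {..<a})"
    using assms unfolding natural_set_def by (fastforce elim!: set_plus_elim)
  moreover have "finite ((A \<inter> {..<a}) + (B \<inter> {..<a}))"
    using assms unfolding natural_set_def by (intro finite_set_plus) auto
  ultimately show "finite ((A + B) \<inter> {..<a})" by (rule finite_subset)
qed

lemma natural_set_sum:
  "finite I \<Longrightarrow> (\<And>i. i \<in> I \<Longrightarrow> natural_set (A i)) \<Longrightarrow> natural_set (\<Sum>i\<in>I. A i)"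
  by (induction I rule: finite_induct) (auto intro: natural_set_plus natural_set_finite)

lemma natural_set_translate:
  assumes "natural_set A"
  shows "natural_set ((+) d ` A \<inter> {0..})"
  unfolding natural_set_def
proof (intro conjI ballI allI)
  fix a :: real
  have "(+) d ` A \<inter> {0..} \<inter> {..<a} \<subseteq> (+) d ` (A \<inter> {..<a - d})" by auto
  moreover have "finite (A \<inter> {..<a - d})" using assms unfolding natural_set_def by blast
  ultimately show "finite ((+) d ` A \<inter> {0..} \<inter> {..<a})" by (meson finite_imageI finite_subset)
qed auto

lemma natural_set_well_ordered: "natural_set A \<Longrightarrow> well_ordered_real A"
  unfolding well_ordered_real_def
proof (intro allI impI)
  fix S assume A: "natural_set A" and S: "S \<subseteq> A" "S \<noteq> {}"
  then obtain x where x: "x \<in> S" by blast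
  let ?T = "S \<inter> {..x}"
  have "?T \<subseteq> A \<inter> {..<x + 1}" using S by auto
  then have fin: "finite ?T" using A unfolding natural_set_def by (meson finite_subset)
  have "Min ?T \<le> y" if "y \<in> S" for y
  proof (cases "y \<le> x")
    case False
    then show ?thesis using Min_le[OF fin, of x] x by auto
  qed (use fin that in auto)
  moreover have "Min ?T \<in> S" using Min_in[OF fin] x by auto
  ultimately show "\<exists>x\<in>S. \<forall>y\<in>S. x \<le> y" by blast
qed

definition finite_sums :: "real set \<Rightarrow> real set" where
  "finite_sums A = {sum_list xs | xs. set xs \<subseteq> A}"

lemma zero_in_finite_sums: "0 \<in> finite_sums A"
  unfolding finite_sums_def by (auto intro!: exI[of _ "[]"])

lemma subset_finite_sums: "A \<subseteq> finite_sums A"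
  unfolding finite_sums_def by (auto intro!: exI[of _ "[x]" for x])

lemma add_in_finite_sums: "x \<in> finite_sums A \<Longrightarrow> y \<in> finite_sums A \<Longrightarrow> x + y \<in> finite_sums A"
proof -
  assume "x \<in> finite_sums A" "y \<in> finite_sums A"
  then obtain xs ys where "set xs \<subseteq> A" "set ys \<subseteq> A" "x = sum_list xs" "y = sum_list ys"
    unfolding finite_sums_def by blast
  then show ?thesis unfolding finite_sums_def by (auto intro!: exI[of _ "xs @ ys"])
qed

text \<open>A sum below \<open>a\<close> has all its nonzero terms in the finite set \<open>A \<inter> {0<..<a}\<close>, and
  at most \<open>a / \<epsilon>\<close> of them, \<open>\<epsilon>\<close> being the least such term.\<close>

lemma natural_set_finite_sums:
  assumes A: "natural_set A"
  shows "natural_set (finite_sums A)"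
  unfolding natural_set_def
proof (intro conjI ballI allI)
  have nonneg: "\<And>x. x \<in> A \<Longrightarrow> 0 \<le> x" using A by (simp add: natural_set_def)
  then show "0 \<le> z" if "z \<in> finite_sums A" for z
    using that unfolding finite_sums_def by (auto intro!: sum_list_nonneg)
  fix a :: real
  define B where "B = A \<inter> {0<..<a}"
  have fin_B: "finite B" using A unfolding natural_set_def B_def
    by (metis finite_Int greaterThanLessThan_eq inf_assoc inf_commute)
  define \<epsilon> where "\<epsilon> = (if B = {} then 1 else Min B)"
  have \<epsilon>: "\<epsilon> > 0" "\<And>x. x \<in> B \<Longrightarrow> \<epsilon> \<le> x" using fin_B by (auto simp: \<epsilon>_def B_def)
  have "finite_sums A \<inter> {..<a} \<subseteq> sum_list ` {ys. set ys \<subseteq> B \<and> length ys \<le> nat \<lceil>a / \<epsilon>\<rceil>}"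
  proof
    fix z assume "z \<in> finite_sums A \<inter> {..<a}"
    then obtain xs where xs: "set xs \<subseteq> A" "z = sum_list xs" "z < a"
      unfolding finite_sums_def by auto
    define ys where "ys = filter (\<lambda>x. x \<noteq> 0) xs"
    have "sum_list ys = z" unfolding ys_def xs(2) by (induction xs) auto
    moreover have ys_B: "set ys \<subseteq> B"
    proof
      fix y assume "y \<in> set ys"
      then have "y \<in> set xs" "y \<noteq> 0" by (auto simp: ys_def)
      moreover have "y \<le> z" using member_le_sum_list[of y xs] xs nonneg calculation by auto
      ultimately show "y \<in> B" using xs nonneg by (force simp: B_def)
    qed
    moreover have "real (length ys) * \<epsilon> \<le> sum_list ys"
      using sum_list_mono[of ys "\<lambda>_. \<epsilon>" "\<lambda>y. y"] ys_B \<epsilon>(2) by (auto simp: sum_list_triv)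
    then have "real (length ys) \<le> a / \<epsilon>"
      using \<open>sum_list ys = z\<close> xs(3) \<epsilon>(1) by (simp add: le_divide_eq)
    then have "length ys \<le> nat \<lceil>a / \<epsilon>\<rceil>" by linarith
    ultimately show "z \<in> sum_list ` {ys. set ys \<subseteq> B \<and> length ys \<le> nat \<lceil>a / \<epsilon>\<rceil>}" by auto
  qed
  then show "finite (finite_sums A \<inter> {..<a})"
    using finite_lists_length_le[OF fin_B] by (meson finite_imageI finite_subset)
qed

lemma dickson_lemma:
  fixes D :: "('a \<Rightarrow> 'b::linorder) set"
  assumes "finite Gs" "\<And>g a. g \<in> Gs \<Longrightarrow> finite ((\<lambda>e. e g) ` D \<inter> {..<a})"
  shows "\<exists>\<Phi>\<subseteq>D. finite \<Phi> \<and> (\<forall>e\<in>D. \<exists>\<phi>\<in>\<Phi>. \<forall>g\<in>Gs. \<phi> g \<le> e g)"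
  using assms
proof (induction Gs arbitrary: D rule: finite_induct)
  case empty
  show ?case by (cases "D = {}") (auto intro: exI[of _ "{e}" for e])
next
  case (insert g Gs)
  obtain \<Phi>0 where \<Phi>0: "\<Phi>0 \<subseteq> D" "finite \<Phi>0" "\<forall>e\<in>D. \<exists>\<phi>\<in>\<Phi>0. \<forall>h\<in>Gs. \<phi> h \<le> e h"
    using insert.IH[of D] insert.prems by auto
  text \<open>If the element of \<open>\<Phi>0\<close> below \<open>e\<close> on \<open>Gs\<close> is not below \<open>e\<close> at \<open>g\<close>, then \<open>e g\<close>
    lies in the finite set \<open>W\<close>; each slice \<open>{e. e g = w}\<close> is covered by the induction hypothesis.\<close>
  define W where "W = (\<lambda>e. e g) ` D \<inter> {..<Max ((\<lambda>\<phi>. \<phi> g) ` \<Phi>0)}"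
  have "\<exists>\<Psi>\<subseteq>{e\<in>D. e g = w}. finite \<Psi> \<and> (\<forall>e\<in>{e\<in>D. e g = w}. \<exists>\<phi>\<in>\<Psi>. \<forall>h\<in>Gs. \<phi> h \<le> e h)" for w
  proof (rule insert.IH)
    fix h a assume "h \<in> Gs"
    then have "finite ((\<lambda>e. e h) ` D \<inter> {..<a})" using insert.prems by simp
    then show "finite ((\<lambda>e. e h) ` {e\<in>D. e g = w} \<inter> {..<a})" by (rule finite_subset[rotated]) auto
  qed
  then have "\<exists>\<Psi>. \<forall>w. \<Psi> w \<subseteq> {e\<in>D. e g = w} \<and> finite (\<Psi> w) \<and>
      (\<forall>e\<in>{e\<in>D. e g = w}. \<exists>\<phi>\<in>\<Psi> w. \<forall>h\<in>Gs. \<phi> h \<le> e h)"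
    by (intro choice allI) blast
  then obtain \<Psi> where \<Psi>: "\<And>w. \<Psi> w \<subseteq> {e\<in>D. e g = w} \<and> finite (\<Psi> w) \<and>
      (\<forall>e\<in>{e\<in>D. e g = w}. \<exists>\<phi>\<in>\<Psi> w. \<forall>h\<in>Gs. \<phi> h \<le> e h)"
    by blast
  have "finite W" using insert.prems unfolding W_def by auto
  then have "\<Phi>0 \<union> (\<Union>w\<in>W. \<Psi> w) \<subseteq> D \<and> finite (\<Phi>0 \<union> (\<Union>w\<in>W. \<Psi> w))" using \<Phi>0 \<Psi> by blast
  moreover have "\<exists>\<phi>\<in>\<Phi>0 \<union> (\<Union>w\<in>W. \<Psi> w). \<forall>h\<in>insert g Gs. \<phi> h \<le> e h" if e: "e \<in> D" for e
  proof -
    obtain \<phi> where \<phi>: "\<phi> \<in> \<Phi>0" "\<forall>h\<in>Gs. \<phi> h \<le> e h" using \<Phi>0 e by blast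
    show ?thesis
    proof (cases "\<phi> g \<le> e g")
      case False
      have "\<phi> g \<le> Max ((\<lambda>\<phi>. \<phi> g) ` \<Phi>0)" using \<phi> \<Phi>0 by auto
      then have "e g \<in> W" using False e unfolding W_def by auto
      moreover obtain \<psi> where "\<psi> \<in> \<Psi> (e g)" "\<forall>h\<in>Gs. \<psi> h \<le> e h" using \<Psi>[of "e g"] e by blast
      moreover have "\<psi> g = e g" using \<Psi>[of "e g"] calculation by blast
      ultimately have "\<psi> \<in> \<Phi>0 \<union> (\<Union>w\<in>W. \<Psi> w)" "\<forall>h\<in>insert g Gs. \<psi> h \<le> e h" by auto
      then show ?thesis by blast
    qed (use \<phi> in auto)
  qed
  ultimately show ?case by blast
qed

section \<open>Asymptotic scales\<close>

locale hardy_scale =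
  fixes M :: "germ set"
  assumes subspace: "mult_R_subspace M" and scale: "asymptotic_scale M"
begin

lemma one_in_M: "1 \<in> M"
  and mult_in_M: "m \<in> M \<Longrightarrow> n \<in> M \<Longrightarrow> m * n \<in> M"
  and gpowr_in_M: "m \<in> M \<Longrightarrow> gpowr m r \<in> M"
  and gpos_M: "m \<in> M \<Longrightarrow> gpos m"
  and ghardy_limit_M: "m \<in> M \<Longrightarrow> ghardy_limit m"
  using subspace by (auto simp: mult_R_subspace_def)

lemma prod_in_M: "(\<And>x. x \<in> S \<Longrightarrow> f x \<in> M) \<Longrightarrow> (\<Prod>x\<in>S. f x) \<in> M"
  by (induction S rule: infinite_finite_induct) (auto simp: one_in_M mult_in_M)

lemma monom_on_in_M: "Gs \<subseteq> M \<Longrightarrow> monom_on Gs e \<in> M"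
  unfolding monom_on_def by (intro prod_in_M gpowr_in_M) auto

lemma M_gle_total: "m \<in> M \<Longrightarrow> n \<in> M \<Longrightarrow> m \<preceq> n \<or> n \<preceq> m"
  by (intro ghardy_limit_gle_total gpos_M ghardy_limit_M mult_in_M gpowr_in_M)

lemma M_gle_antisym:
  assumes "m \<in> M" "n \<in> M" "m \<preceq> n" "n \<preceq> m"
  shows "m = n"
proof -
  let ?q = "m * gpowr n (-1)"
  have n: "n * gpowr n (-1) = 1" using assms(2) by (simp add: gpos_M mult_gpowr_minus_one)
  have "?q \<preceq> 1" "1 \<preceq> ?q"
    using gle_mult_right[OF assms(3), of "gpowr n (-1)"] gle_mult_right[OF assms(4), of "gpowr n (-1)"] n
    by simp_all
  then have "?q = 1"
    using scale assms by (auto simp: asymptotic_scale_def gasymp_def intro: mult_in_M gpowr_in_M)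
  then show ?thesis using n by (metis mult.assoc mult.commute mult_1_right)
qed

lemma M_gsmall_iff:
  assumes "m \<in> M"
  shows "gsmall m \<longleftrightarrow> m \<preceq> 1 \<and> m \<noteq> 1"
proof
  assume "gsmall m"
  then show "m \<preceq> 1 \<and> m \<noteq> 1" using gsmall_gle_one gsmall_neq_one gpos_M assms by blast
next
  assume "m \<preceq> 1 \<and> m \<noteq> 1"
  then show "gsmall m"
    using ghardy_limit_gle_one[OF gpos_M ghardy_limit_M] M_gle_antisym[OF _ one_in_M] assms by blast
qed

lemma M_gsmall_ratio:
  assumes "m \<in> M" "q \<in> M" "m \<preceq> q" "m \<noteq> q"
  shows "gsmall (m * gpowr q (-1))"
proof -
  have q: "q * gpowr q (-1) = 1" using assms(2) by (simp add: gpos_M mult_gpowr_minus_one)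
  have "m * gpowr q (-1) \<preceq> 1" using gle_mult_right[OF assms(3), of "gpowr q (-1)"] q by simp
  moreover have "m * gpowr q (-1) \<noteq> 1"
  proof
    assume "m * gpowr q (-1) = 1"
    then have "m * (gpowr q (-1) * q) = q" by (simp add: mult.assoc[symmetric])
    then show False using q assms(4) by (simp add: mult.commute)
  qed
  ultimately show ?thesis using assms by (simp add: M_gsmall_iff mult_in_M gpowr_in_M)
qed

lemma finite_gle_greatest:
  assumes "finite X" "X \<noteq> {}" "\<And>x. x \<in> X \<Longrightarrow> f x \<in> M"
  shows "\<exists>x\<in>X. \<forall>y\<in>X. f y \<preceq> f x"
  using assms
proof (induction X rule: finite_ne_induct)
  case (insert x X)
  then obtain y where y: "y \<in> X" "\<forall>z\<in>X. f z \<preceq> f y" by auto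
  show ?case
    using M_gle_total[of "f x" "f y"] insert.prems y by (auto intro: gle_trans)
qed simp

end

section \<open>Series\<close>

lemma ser_mult_mono_ser:
  assumes "gpos c"
  shows "ser_mult (mono_ser a c) F u = a * F (gpowr c (-1) * u)"
proof -
  let ?v = "gpowr c (-1) * u"
  have "c * q = u \<longleftrightarrow> q = ?v" for q
    using gpos_mult_left_cancel[OF assms, of q ?v] gpos_mult_inverse_left[OF assms, of u] by auto
  then have "{(p, q). mono_ser a c p \<noteq> 0 \<and> F q \<noteq> 0 \<and> p * q = u} =
      (if a \<noteq> 0 \<and> F ?v \<noteq> 0 then {(c, ?v)} else {})"
    unfolding mono_ser_def by (intro set_eqI) (clarsimp; blast)
  then show ?thesis by (simp add: ser_mult_def mono_ser_def)
qed

lemma supp_ser_mult_mono_ser: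
  assumes "gpos c"
  shows "supp (ser_mult (mono_ser a c) F) \<subseteq> c *o supp F"
proof
  fix u assume "u \<in> supp (ser_mult (mono_ser a c) F)"
  then have "gpowr c (-1) * u \<in> supp F" by (auto simp: supp_def ser_mult_mono_ser[OF assms])
  moreover have "u = c * (gpowr c (-1) * u)" using gpos_mult_inverse_left[OF assms] by simp
  ultimately show "u \<in> c *o supp F" unfolding elt_set_times_def by blast
qed

lemma (in hardy_scale) series_set_supp_subset: "F \<in> series_set M \<Longrightarrow> supp F \<subseteq> M"
  by (simp add: series_set_def is_series_def)

lemma (in hardy_scale) lm_series:
  assumes "F \<in> series_set M" "F \<noteq> (\<lambda>_. 0)"
  shows "F (lm F) \<noteq> 0" and "F n \<noteq> 0 \<Longrightarrow> n \<preceq> lm F"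
proof -
  have supp_M: "supp F \<subseteq> M" using assms(1) by (rule series_set_supp_subset)
  have "supp F \<noteq> {}" using assms(2) by (auto simp: supp_def)
  then obtain m where "m \<in> supp F" "\<forall>n\<in>supp F. n \<preceq> m"
    using assms(1) unfolding series_set_def is_series_def by blast
  then have m: "F m \<noteq> 0" "\<forall>n. F n \<noteq> 0 \<longrightarrow> n \<preceq> m" by (auto simp: supp_def)
  have "lm F = m"
    unfolding lm_def
  proof (rule the_equality)
    fix m' assume "F m' \<noteq> 0 \<and> (\<forall>n. F n \<noteq> 0 \<longrightarrow> n \<preceq> m')"
    then show "m' = m" using m supp_M by (intro M_gle_antisym) (auto simp: supp_def)
  qed (use m in blast)
  then show "F (lm F) \<noteq> 0" "F n \<noteq> 0 \<Longrightarrow> n \<preceq> lm F" using m by auto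
qed

section \<open>Exponent systems\<close>

text \<open>The supports of \<open>M\<close>-generalized power series are the sets \<open>monom_on Gs ` \<Gamma>\<close> of an
  exponent system: finitely many small generators and exponent vectors, indexed by the
  generators rather than by positions, with natural coordinate sets.\<close>

definition exponent_system :: "germ set \<Rightarrow> germ set \<Rightarrow> (germ \<Rightarrow> real) set \<Rightarrow> bool" where
  "exponent_system M Gs \<Gamma> \<longleftrightarrow> finite Gs \<and> Gs \<noteq> {} \<and> Gs \<subseteq> M \<and> (\<forall>g\<in>Gs. gsmall g) \<and>
     (\<forall>g\<in>Gs. natural_set ((\<lambda>e. e g) ` \<Gamma>)) \<and> (\<forall>e\<in>\<Gamma>. \<forall>g. g \<notin> Gs \<longrightarrow> e g = 0)"

lemma exponent_system_natural_set:
  assumes "exponent_system M Gs \<Gamma>"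
  shows "natural_set ((\<lambda>e. e g) ` \<Gamma>)"
proof (cases "g \<in> Gs")
  case False
  then have "(\<lambda>e. e g) ` \<Gamma> \<subseteq> {0}" using assms unfolding exponent_system_def by auto
  moreover have "natural_set {0}" by (rule natural_set_finite) auto
  ultimately show ?thesis using natural_set_subset by blast
qed (use assms in \<open>auto simp: exponent_system_def\<close>)

lemma exponent_system_shift:
  assumes sys: "exponent_system M Gs \<Gamma>" and d: "\<And>g. 0 \<le> d g" "\<And>g. g \<notin> Gs \<Longrightarrow> d g = 0"
  shows "exponent_system M Gs ((\<lambda>e g. d g + e g) ` \<Gamma>)"
proof -
  have "natural_set ((\<lambda>e. e g) ` (\<lambda>e g. d g + e g) ` \<Gamma>)" for g
  proof (rule natural_set_subset[OF natural_set_translate[OF exponent_system_natural_set[OF sys]]])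
    show "(\<lambda>e. e g) ` (\<lambda>e g. d g + e g) ` \<Gamma> \<subseteq> (+) (d g) ` (\<lambda>e. e g) ` \<Gamma> \<inter> {0..}"
      using exponent_system_natural_set[OF sys, of g] d(1)[of g] by (auto simp: natural_set_def)
  qed
  then show ?thesis using sys d(2) unfolding exponent_system_def by auto
qed

definition generated_exponents :: "germ set \<Rightarrow> (germ \<Rightarrow> real set) \<Rightarrow> (germ \<Rightarrow> real) set" where
  "generated_exponents Gs A = {e. (\<forall>g\<in>Gs. e g \<in> finite_sums (A g)) \<and> (\<forall>g. g \<notin> Gs \<longrightarrow> e g = 0)}"

lemma generated_exponentsI:
  "(\<And>g. g \<in> Gs \<Longrightarrow> e g \<in> A g \<or> e g = 0) \<Longrightarrow> (\<And>g. g \<notin> Gs \<Longrightarrow> e g = 0) \<Longrightarrow>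
    e \<in> generated_exponents Gs A"
  unfolding generated_exponents_def using subset_finite_sums zero_in_finite_sums by fastforce

lemma generated_exponents_add:
  "e \<in> generated_exponents Gs A \<Longrightarrow> d \<in> generated_exponents Gs A \<Longrightarrow>
    (\<lambda>g. e g + d g) \<in> generated_exponents Gs A"
  unfolding generated_exponents_def by (auto intro: add_in_finite_sums)

lemma exponent_system_generated_exponents:
  assumes "finite Gs" "Gs \<noteq> {}" "Gs \<subseteq> M" "\<And>g. g \<in> Gs \<Longrightarrow> gsmall g" "\<And>g. natural_set (A g)"
  shows "exponent_system M Gs (generated_exponents Gs A)"
proof -
  have "natural_set ((\<lambda>e. e g) ` generated_exponents Gs A)" if "g \<in> Gs" for g
    by (rule natural_set_subset[OF natural_set_finite_sums[OF assms(5)]])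
      (use that in \<open>auto simp: generated_exponents_def\<close>)
  then show ?thesis using assms unfolding exponent_system_def generated_exponents_def by auto
qed

lemma monom_on_in_generated_exponents:
  assumes "finite Gs" "Gs' \<subseteq> Gs" "\<And>g. g \<in> Gs \<Longrightarrow> gpos g"
    and "\<And>g. g \<in> Gs' \<Longrightarrow> e g \<in> A g" "\<And>g. g \<notin> Gs' \<Longrightarrow> e g = 0"
  shows "monom_on Gs' e \<in> monom_on Gs ` generated_exponents Gs A"
proof -
  have "e \<in> generated_exponents Gs A" by (rule generated_exponentsI) (use assms in auto)
  moreover have "monom_on Gs e = monom_on Gs' e" by (rule monom_on_mono_neutral) (use assms in auto)
  ultimately show ?thesis by (metis image_eqI)
qed

text \<open>The exponent vector of \<open>monom_on Gs' e * c\<close> is \<open>e - \<phi>\<close> on \<open>Gs'\<close> plus the unit vector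
  at the generator \<open>monom_on Gs' \<phi> * c\<close>.\<close>

lemma monom_on_quotient_in_generated_exponents:
  assumes Gs: "finite Gs" "Gs' \<subseteq> Gs" "\<And>g. g \<in> Gs \<Longrightarrow> gpos g"
    and n: "monom_on Gs' \<phi> * c \<in> Gs"
    and A: "\<And>g. g \<in> Gs' \<Longrightarrow> \<phi> g \<le> e g \<and> e g - \<phi> g \<in> A g" "\<And>g. 1 \<in> A g"
  shows "monom_on Gs' e * c \<in> monom_on Gs ` generated_exponents Gs A"
proof -
  let ?n = "monom_on Gs' \<phi> * c"
  define d1 where "d1 g = (if g \<in> Gs' then e g - \<phi> g else 0)" for g
  define d2 :: "germ \<Rightarrow> real" where "d2 g = (if g = ?n then 1 else 0)" for g
  have "d1 \<in> generated_exponents Gs A" "d2 \<in> generated_exponents Gs A"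
    using A Gs(2) n by (auto intro!: generated_exponentsI simp: d1_def d2_def)
  then have "(\<lambda>g. d1 g + d2 g) \<in> generated_exponents Gs A" by (rule generated_exponents_add)
  moreover have "monom_on Gs (\<lambda>g. d1 g + d2 g) = monom_on Gs' e * c"
  proof -
    have gpos_Gs': "\<And>g. g \<in> Gs' \<Longrightarrow> gpos g" using Gs by blast
    have "monom_on Gs d1 = monom_on Gs' (\<lambda>g. e g - \<phi> g)"
      using Gs by (subst monom_on_mono_neutral[of Gs Gs']) (auto simp: d1_def intro: monom_on_cong)
    moreover have "monom_on Gs d2 = ?n" unfolding d2_def by (rule monom_on_indicator[OF Gs(3,1) n])
    moreover have "monom_on Gs' (\<lambda>g. e g - \<phi> g) * monom_on Gs' \<phi> = monom_on Gs' e"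
      using monom_on_add[of Gs' "\<lambda>g. e g - \<phi> g" \<phi>, OF gpos_Gs'] by simp
    ultimately show ?thesis using monom_on_add[of Gs d1 d2, OF Gs(3)] by (simp add: mult.assoc[symmetric])
  qed
  ultimately show ?thesis by (metis image_eqI)
qed

lemma M_gps_data_if_natural_coordinates:
  assumes "\<And>i. i \<le> k \<Longrightarrow> m i \<in> M \<and> gsmall (m i)" "\<And>i. i \<le> k \<Longrightarrow> natural_set (A i)"
    and coord: "\<And>\<alpha>. G \<alpha> \<noteq> 0 \<Longrightarrow> (\<forall>i\<le>k. \<alpha> i \<in> A i) \<and> (\<forall>i>k. \<alpha> i = 0)"
  shows "M_gps_data M k G m"
proof -
  have "G \<alpha> \<noteq> 0 \<Longrightarrow> i \<le> k \<Longrightarrow> 0 \<le> \<alpha> i" for \<alpha> i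
    using coord assms(2) unfolding natural_set_def by blast
  then have "gen_power_series k G"
    unfolding gen_power_series_def using coord assms(2) natural_set_well_ordered
    by (intro conjI exI[of _ A]) blast+
  moreover have "{\<alpha> i | \<alpha>. G \<alpha> \<noteq> 0} \<inter> {0..<a} \<subseteq> A i \<inter> {..<a}" if "i \<le> k" for i a
    using coord that by auto
  then have "natural_support k G"
    unfolding natural_support_def using assms(2)
    by (meson finite_subset natural_set_def)
  ultimately show ?thesis using assms(1) by (simp add: M_gps_data_def)
qed

lemma M_gps_data_natural_coordinates:
  assumes "M_gps_data M k G m" "i \<le> k"
  shows "natural_set ((\<lambda>\<alpha>. \<alpha> i) ` {\<alpha>. G \<alpha> \<noteq> 0})"
  unfolding natural_set_def
proof (intro conjI ballI allI)
  have nonneg: "G \<alpha> \<noteq> 0 \<Longrightarrow> 0 \<le> \<alpha> i" for \<alpha>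
    using assms unfolding M_gps_data_def gen_power_series_def by auto
  then show "0 \<le> x" if "x \<in> (\<lambda>\<alpha>. \<alpha> i) ` {\<alpha>. G \<alpha> \<noteq> 0}" for x using that by auto
  fix a :: real
  have "(\<lambda>\<alpha>. \<alpha> i) ` {\<alpha>. G \<alpha> \<noteq> 0} \<inter> {..<a} \<subseteq> {\<alpha> i | \<alpha>. G \<alpha> \<noteq> 0} \<inter> {0..<max a 1}"
    using nonneg by fastforce
  moreover have "finite ({\<alpha> i | \<alpha>. G \<alpha> \<noteq> 0} \<inter> {0..<max a 1})"
    using assms unfolding M_gps_data_def natural_support_def by simp
  ultimately show "finite ((\<lambda>\<alpha>. \<alpha> i) ` {\<alpha>. G \<alpha> \<noteq> 0} \<inter> {..<a})" by (rule finite_subset)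
qed

lemma monom_on_enumerate:
  assumes "finite Gs" "Gs \<noteq> {}"
  shows "\<exists>k m. m ` {..k} = Gs \<and> (\<forall>e. monom k m (\<lambda>i. e (m i)) = monom_on Gs e)"
proof -
  obtain m where m: "bij_betw m {0..<card Gs} Gs" using ex_bij_betw_nat_finite[OF assms(1)] by blast
  have "card Gs > 0" using assms by (simp add: card_gt_0_iff)
  then have "{0..<card Gs} = {..card Gs - 1}" by auto
  with m have bij: "bij_betw m {..card Gs - 1} Gs" by simp
  then have "(\<Prod>i\<le>card Gs - 1. gpowr (m i) (e (m i))) = (\<Prod>g\<in>Gs. gpowr g (e g))" for e
    by (rule prod.reindex_bij_betw)
  then show ?thesis using bij unfolding bij_betw_def monom_def monom_on_def
    by (intro exI[of _ "card Gs - 1"] exI[of _ m]) simp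
qed

text \<open>Different exponent vectors may give the same monomial, so one representative is chosen
  for each monomial of the support.\<close>

lemma gps_eval_choice:
  fixes H :: "germ \<Rightarrow> 'k::comm_ring_1"
  assumes c: "gpos c" and supp: "supp H \<subseteq> c *o monom k m ` V"
  obtains G where "gps_eval k G m = (\<lambda>w. H (c * w))" "\<And>\<alpha>. G \<alpha> \<noteq> 0 \<Longrightarrow> \<alpha> \<in> V"
proof -
  define rep where "rep u = (SOME \<alpha>. \<alpha> \<in> V \<and> u = c * monom k m \<alpha>)" for u
  have rep: "rep u \<in> V \<and> u = c * monom k m (rep u)" if "H u \<noteq> 0" for u
  proof -
    have "\<exists>\<alpha>. \<alpha> \<in> V \<and> u = c * monom k m \<alpha>"
      using supp that unfolding supp_def elt_set_times_def by blast
    then show ?thesis unfolding rep_def by (rule someI_ex)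
  qed
  have monom_rep: "monom k m (rep (c * w)) = w" if "H (c * w) \<noteq> 0" for w
    using gpos_mult_left_cancel[OF c] rep[OF that] by metis
  define G where "G \<alpha> = (if \<alpha> \<in> rep ` {u. H u \<noteq> 0} then H (c * monom k m \<alpha>) else 0)" for \<alpha>
  have G_supp: "\<exists>u. H u \<noteq> 0 \<and> \<alpha> = rep u" if "G \<alpha> \<noteq> 0" for \<alpha>
    using that unfolding G_def by (auto split: if_splits)
  have "gps_eval k G m w = H (c * w)" for w
  proof -
    have "{\<alpha>. G \<alpha> \<noteq> 0 \<and> monom k m \<alpha> = w} = (if H (c * w) \<noteq> 0 then {rep (c * w)} else {})"
    proof (intro set_eqI iffI)
      fix \<alpha> assume "\<alpha> \<in> {\<alpha>. G \<alpha> \<noteq> 0 \<and> monom k m \<alpha> = w}"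
      then obtain u where "H u \<noteq> 0" "\<alpha> = rep u" "monom k m \<alpha> = w" using G_supp by blast
      moreover from this have "u = c * w" using rep by metis
      ultimately show "\<alpha> \<in> (if H (c * w) \<noteq> 0 then {rep (c * w)} else {})" by simp
    next
      fix \<alpha> assume "\<alpha> \<in> (if H (c * w) \<noteq> 0 then {rep (c * w)} else {})"
      then have "H (c * w) \<noteq> 0" "\<alpha> = rep (c * w)" by (auto split: if_splits)
      moreover from this have "monom k m \<alpha> = w" using monom_rep by blast
      ultimately show "\<alpha> \<in> {\<alpha>. G \<alpha> \<noteq> 0 \<and> monom k m \<alpha> = w}" by (auto simp: G_def)
    qed
    then show ?thesis using monom_rep by (auto simp: gps_eval_def G_def)
  qed
  moreover have "\<alpha> \<in> V" if "G \<alpha> \<noteq> 0" for \<alpha> using G_supp[OF that] rep by blast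
  ultimately show ?thesis using that by blast
qed

context hardy_scale
begin

lemma exponent_system_gpos: "exponent_system M Gs \<Gamma> \<Longrightarrow> g \<in> Gs \<Longrightarrow> gpos g"
  unfolding exponent_system_def using gpos_M by blast

lemma exponent_system_gpos_monom_on: "exponent_system M Gs \<Gamma> \<Longrightarrow> gpos (monom_on Gs e)"
  by (rule gpos_monom_on) (rule exponent_system_gpos)

lemma gps_eval_if_supp:
  fixes H :: "germ \<Rightarrow> 'k::comm_ring_1"
  assumes sys: "exponent_system M Gs \<Gamma>" and c: "gpos c" and supp: "supp H \<subseteq> c *o monom_on Gs ` \<Gamma>"
  obtains k G m where "M_gps_data M k G m" "gps_eval k G m = (\<lambda>w. H (c * w))"
    "\<And>e. monom k m (\<lambda>i. e (m i)) = monom_on Gs e"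
proof -
  have "finite Gs" "Gs \<noteq> {}" using sys unfolding exponent_system_def by auto
  then obtain k m where m: "m ` {..k} = Gs" and monom_m: "\<And>e. monom k m (\<lambda>i. e (m i)) = monom_on Gs e"
    using monom_on_enumerate by blast
  define vec where "vec e = (\<lambda>i. if i \<le> k then e (m i) else 0)" for e :: "germ \<Rightarrow> real"
  have "monom k m (vec e) = monom k m (\<lambda>i. e (m i))" for e
    unfolding monom_def vec_def by (rule prod.cong) auto
  then have "monom_on Gs ` \<Gamma> = monom k m ` vec ` \<Gamma>" by (simp add: image_image monom_m)
  then obtain G where eval: "gps_eval k G m = (\<lambda>w. H (c * w))" and G: "\<And>\<alpha>. G \<alpha> \<noteq> 0 \<Longrightarrow> \<alpha> \<in> vec ` \<Gamma>"
    using gps_eval_choice[OF c] supp by metis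
  have "M_gps_data M k G m"
  proof (rule M_gps_data_if_natural_coordinates)
    show "i \<le> k \<Longrightarrow> m i \<in> M \<and> gsmall (m i)" for i
      using m sys unfolding exponent_system_def by auto
    show "i \<le> k \<Longrightarrow> natural_set ((\<lambda>e. e (m i)) ` \<Gamma>)" for i
      by (rule exponent_system_natural_set[OF sys])
    show "(\<forall>i\<le>k. \<alpha> i \<in> (\<lambda>e. e (m i)) ` \<Gamma>) \<and> (\<forall>i>k. \<alpha> i = 0)" if "G \<alpha> \<noteq> 0" for \<alpha>
      using G[OF that] unfolding vec_def by auto
  qed
  then show ?thesis using that eval monom_m by blast
qed

lemma power_series_ring_if_supp:
  assumes "exponent_system M Gs \<Gamma>" "supp H \<subseteq> monom_on Gs ` \<Gamma>"
  shows "H \<in> power_series_ring M"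
proof -
  have "supp H \<subseteq> 1 *o monom_on Gs ` \<Gamma>" using assms(2) by simp
  then obtain k G m where "M_gps_data M k G m" "gps_eval k G m = (\<lambda>w. H (1 * w))"
    by (rule gps_eval_if_supp[OF assms(1) gpos_one])
  then show ?thesis unfolding power_series_ring_def by auto
qed

lemma laurent_series_ring_if_supp:
  assumes sys: "exponent_system M Gs \<Gamma>" and supp: "supp H \<subseteq> monom_on Gs r *o monom_on Gs ` \<Gamma>"
  shows "H \<in> laurent_series_ring M"
proof -
  have c: "gpos (monom_on Gs r)" using sys by (rule exponent_system_gpos_monom_on)
  obtain k G m where data: "M_gps_data M k G m" and eval: "gps_eval k G m = (\<lambda>w. H (monom_on Gs r * w))"
    and monom_m: "\<And>e. monom k m (\<lambda>i. e (m i)) = monom_on Gs e"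
    by (rule gps_eval_if_supp[OF sys c supp]) blast
  have "H = ser_mult (mono_ser 1 (monom k m (\<lambda>i. r (m i)))) (gps_eval k G m)"
    by (rule ext) (simp add: monom_m eval ser_mult_mono_ser[OF c] gpos_mult_inverse_left[OF c])
  then show ?thesis using data unfolding laurent_series_ring_def by blast
qed

lemma gps_eval_exponent_system:
  assumes data: "M_gps_data M k G m"
  obtains Gs \<Gamma> \<sigma> where "exponent_system M Gs \<Gamma>" "\<And>\<alpha>. monom k m \<alpha> = monom_on Gs (\<sigma> \<alpha>)"
    "supp (gps_eval k G m) \<subseteq> monom_on Gs ` \<Gamma>"
proof -
  define Gs where "Gs = m ` {..k}"
  define I where "I g = {i \<in> {..k}. m i = g}" for g
  define \<sigma> where "\<sigma> \<alpha> g = (\<Sum>i\<in>I g. \<alpha> i)" for \<alpha> :: "nat \<Rightarrow> real" and g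
  define \<Gamma> where "\<Gamma> = \<sigma> ` {\<alpha>. G \<alpha> \<noteq> 0}"
  have m: "\<And>i. i \<le> k \<Longrightarrow> m i \<in> M \<and> gsmall (m i)" using data by (simp add: M_gps_data_def)
  have monom: "monom k m \<alpha> = monom_on Gs (\<sigma> \<alpha>)" for \<alpha>
  proof -
    have "monom k m \<alpha> = (\<Prod>g\<in>Gs. \<Prod>i\<in>I g. gpowr g (\<alpha> i))"
      unfolding monom_def Gs_def I_def by (subst prod.image_gen) (auto intro!: prod.cong)
    also have "\<dots> = monom_on Gs (\<sigma> \<alpha>)"
      unfolding monom_on_def \<sigma>_def using m by (intro prod.cong refl gpowr_sum gpos_M) (auto simp: Gs_def)
    finally show ?thesis .
  qed
  have "natural_set ((\<lambda>e. e g) ` \<Gamma>)" for g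
  proof (rule natural_set_subset)
    show "natural_set (\<Sum>i\<in>I g. (\<lambda>\<alpha>. \<alpha> i) ` {\<alpha>. G \<alpha> \<noteq> 0})"
      by (intro natural_set_sum M_gps_data_natural_coordinates[OF data]) (auto simp: I_def)
    show "(\<lambda>e. e g) ` \<Gamma> \<subseteq> (\<Sum>i\<in>I g. (\<lambda>\<alpha>. \<alpha> i) ` {\<alpha>. G \<alpha> \<noteq> 0})"
    proof
      fix x assume "x \<in> (\<lambda>e. e g) ` \<Gamma>"
      then obtain \<alpha> where "G \<alpha> \<noteq> 0" "x = (\<Sum>i\<in>I g. \<alpha> i)" unfolding \<Gamma>_def \<sigma>_def by blast
      moreover have "finite (I g)" by (simp add: I_def)
      ultimately show "x \<in> (\<Sum>i\<in>I g. (\<lambda>\<alpha>. \<alpha> i) ` {\<alpha>. G \<alpha> \<noteq> 0})"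
        by (auto simp: set_sum_alt)
    qed
  qed
  moreover have "\<sigma> \<alpha> g = 0" if "g \<notin> Gs" for \<alpha> g
  proof -
    have "I g = {}" using that by (auto simp: I_def Gs_def)
    then show ?thesis by (simp add: \<sigma>_def)
  qed
  ultimately have "exponent_system M Gs \<Gamma>"
    using m unfolding exponent_system_def Gs_def \<Gamma>_def by auto
  moreover have "supp (gps_eval k G m) \<subseteq> monom_on Gs ` \<Gamma>"
  proof
    fix n assume "n \<in> supp (gps_eval k G m)"
    then have "{\<alpha>. G \<alpha> \<noteq> 0 \<and> monom k m \<alpha> = n} \<noteq> {}" by (force simp: supp_def gps_eval_def)
    then show "n \<in> monom_on Gs ` \<Gamma>" unfolding \<Gamma>_def using monom by blast
  qed
  ultimately show ?thesis using that monom by blast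
qed

lemma power_series_ring_exponent_system:
  assumes "F \<in> power_series_ring M"
  obtains Gs \<Gamma> where "exponent_system M Gs \<Gamma>" "supp F \<subseteq> monom_on Gs ` \<Gamma>"
proof -
  from assms obtain k G m where "M_gps_data M k G m" "F = gps_eval k G m"
    unfolding power_series_ring_def by blast
  then show ?thesis using gps_eval_exponent_system that by metis
qed

lemma laurent_series_ring_exponent_system:
  assumes "F \<in> laurent_series_ring M"
  obtains Gs \<Gamma> r where "exponent_system M Gs \<Gamma>" "supp F \<subseteq> monom_on Gs r *o monom_on Gs ` \<Gamma>"
proof -
  obtain k G m r0 where F: "F = ser_mult (mono_ser 1 (monom k m r0)) (gps_eval k G m)"
    and data: "M_gps_data M k G m"
    using assms unfolding laurent_series_ring_def by blast
  obtain Gs \<Gamma> \<sigma> where sys: "exponent_system M Gs \<Gamma>" and monom: "\<And>\<alpha>. monom k m \<alpha> = monom_on Gs (\<sigma> \<alpha>)"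
    and supp: "supp (gps_eval k G m) \<subseteq> monom_on Gs ` \<Gamma>"
    using gps_eval_exponent_system[OF data] by blast
  have "gpos (monom_on Gs (\<sigma> r0))" using sys by (rule exponent_system_gpos_monom_on)
  then have "supp F \<subseteq> monom_on Gs (\<sigma> r0) *o supp (gps_eval k G m)"
    unfolding F monom by (rule supp_ser_mult_mono_ser)
  also have "\<dots> \<subseteq> monom_on Gs (\<sigma> r0) *o monom_on Gs ` \<Gamma>"
    using supp by (rule set_times_mono)
  finally have "supp F \<subseteq> monom_on Gs (\<sigma> r0) *o monom_on Gs ` \<Gamma>" .
  then show ?thesis using that sys by blast
qed

text \<open>By Dickson's lemma, a subset of the support has finitely many exponent vectors that are
  coordinatewise minimal; the largest of their monomials is the largest element.\<close>

lemma series_set_if_supp: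
  assumes sys: "exponent_system M Gs \<Gamma>" and c: "c \<in> M" and supp: "supp F \<subseteq> c *o monom_on Gs ` \<Gamma>"
  shows "F \<in> series_set M"
proof -
  have Gs: "finite Gs" "Gs \<subseteq> M" "\<And>g. g \<in> Gs \<Longrightarrow> gsmall g"
    using sys unfolding exponent_system_def by auto
  have in_M: "c * monom_on Gs e \<in> M" for e using c Gs(2) by (intro mult_in_M monom_on_in_M)
  have "\<exists>m\<in>S. \<forall>n\<in>S. n \<preceq> m" if S: "S \<subseteq> supp F" "S \<noteq> {}" for S
  proof -
    define D where "D = {e \<in> \<Gamma>. c * monom_on Gs e \<in> S}"
    have S_D: "S = (\<lambda>e. c * monom_on Gs e) ` D"
    proof (intro equalityI subsetI)
      fix s assume "s \<in> S"
      then obtain e where "e \<in> \<Gamma>" "s = c * monom_on Gs e"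
        using S(1) supp unfolding elt_set_times_def by blast
      then show "s \<in> (\<lambda>e. c * monom_on Gs e) ` D" using \<open>s \<in> S\<close> unfolding D_def by blast
    qed (auto simp: D_def)
    have "finite ((\<lambda>e. e g) ` D \<inter> {..<a})" for g a
    proof (rule finite_subset)
      show "finite ((\<lambda>e. e g) ` \<Gamma> \<inter> {..<a})"
        using exponent_system_natural_set[OF sys] by (simp add: natural_set_def)
    qed (auto simp: D_def)
    then obtain \<Phi> where \<Phi>: "\<Phi> \<subseteq> D" "finite \<Phi>" "\<forall>e\<in>D. \<exists>\<phi>\<in>\<Phi>. \<forall>g\<in>Gs. \<phi> g \<le> e g"
      using dickson_lemma[OF Gs(1), of D] by blast
    have "\<Phi> \<noteq> {}" using S(2) S_D \<Phi>(3) by blast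
    with \<Phi>(2) have "\<exists>\<psi>\<in>\<Phi>. \<forall>\<phi>\<in>\<Phi>. c * monom_on Gs \<phi> \<preceq> c * monom_on Gs \<psi>"
      using in_M by (rule finite_gle_greatest)
    then obtain \<psi> where \<psi>: "\<psi> \<in> \<Phi>" "\<forall>\<phi>\<in>\<Phi>. c * monom_on Gs \<phi> \<preceq> c * monom_on Gs \<psi>"
      by blast
    have "c * monom_on Gs e \<preceq> c * monom_on Gs \<psi>" if e: "e \<in> D" for e
    proof -
      obtain \<phi> where \<phi>: "\<phi> \<in> \<Phi>" "\<forall>g\<in>Gs. \<phi> g \<le> e g" using \<Phi>(3) e by blast
      have "monom_on Gs e \<preceq> monom_on Gs \<phi>"
        using \<phi>(2) Gs by (intro monom_on_antimono gpos_M) auto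
      then have "c * monom_on Gs e \<preceq> c * monom_on Gs \<phi>" by (rule gle_mult[OF gle_refl])
      then show ?thesis using \<psi>(2) \<phi>(1) by (blast intro: gle_trans)
    qed
    then show ?thesis using \<psi>(1) \<Phi>(1) S_D by blast
  qed
  moreover have "supp F \<subseteq> M" using supp in_M unfolding elt_set_times_def by blast
  ultimately show ?thesis unfolding series_set_def is_series_def by blast
qed

lemma laurent_series_ring_subset_series_set: "laurent_series_ring M \<subseteq> series_set M"
proof
  fix F :: "germ \<Rightarrow> 'k::comm_ring_1" assume "F \<in> laurent_series_ring M"
  then obtain Gs \<Gamma> r where "exponent_system M Gs \<Gamma>" "supp F \<subseteq> monom_on Gs r *o monom_on Gs ` \<Gamma>"
    by (rule laurent_series_ring_exponent_system)
  moreover from this have "monom_on Gs r \<in> M" by (intro monom_on_in_M) (simp add: exponent_system_def)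
  ultimately show "F \<in> series_set M" using series_set_if_supp by blast
qed

lemma power_series_ring_subset_series_set: "power_series_ring M \<subseteq> series_set M"
proof
  fix F :: "germ \<Rightarrow> 'k::comm_ring_1" assume "F \<in> power_series_ring M"
  then obtain Gs \<Gamma> where "exponent_system M Gs \<Gamma>" "supp F \<subseteq> monom_on Gs ` \<Gamma>"
    by (rule power_series_ring_exponent_system)
  then show "F \<in> series_set M" by (intro series_set_if_supp[OF _ one_in_M]) auto
qed

end

section \<open>Leading terms\<close>

context hardy_scale
begin

lemma laurent_series_ring_rescale:
  fixes F H :: "germ \<Rightarrow> 'k::comm_ring_1"
  assumes "F \<in> laurent_series_ring M" "F q \<noteq> 0" and H: "\<And>v. H v \<noteq> 0 \<Longrightarrow> F (q * v) \<noteq> 0"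
  shows "H \<in> laurent_series_ring M"
proof -
  obtain Gs \<Gamma> r where sys: "exponent_system M Gs \<Gamma>"
    and supp: "supp F \<subseteq> monom_on Gs r *o monom_on Gs ` \<Gamma>"
    using assms(1) by (rule laurent_series_ring_exponent_system)
  have gpos_Gs: "\<And>g. g \<in> Gs \<Longrightarrow> gpos g" using sys by (rule exponent_system_gpos)
  obtain \<beta> where q: "q = monom_on Gs r * monom_on Gs \<beta>"
    using supp assms(2) unfolding supp_def elt_set_times_def by blast
  have "supp H \<subseteq> monom_on Gs (\<lambda>g. - \<beta> g) *o monom_on Gs ` \<Gamma>"
  proof
    fix v assume "v \<in> supp H"
    then obtain e where e: "e \<in> \<Gamma>" "monom_on Gs r * (monom_on Gs \<beta> * v) = monom_on Gs r * monom_on Gs e"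
      using H supp q unfolding supp_def elt_set_times_def by (auto simp: mult.assoc)
    from e(2) have "monom_on Gs \<beta> * v = monom_on Gs e"
      by (rule gpos_mult_left_cancel[OF exponent_system_gpos_monom_on[OF sys]])
    then have "v = monom_on Gs (\<lambda>g. - \<beta> g) * monom_on Gs e"
      using monom_on_uminus[of Gs \<beta>, OF gpos_Gs] by (metis mult.assoc mult_1_left)
    then show "v \<in> monom_on Gs (\<lambda>g. - \<beta> g) *o monom_on Gs ` \<Gamma>"
      using e(1) unfolding elt_set_times_def by blast
  qed
  then show ?thesis by (rule laurent_series_ring_if_supp[OF sys])
qed

lemma laurent_series_leading_term:
  fixes F :: "germ \<Rightarrow> 'k::field"
  assumes FL: "F \<in> laurent_series_ring M" and F0: "F \<noteq> (\<lambda>_. 0)"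
  shows "\<exists>a E. a \<noteq> 0 \<and> E \<in> laurent_series_ring M \<and> (E = (\<lambda>_. 0) \<or> gsmall (lm E)) \<and>
           F = ser_mult (mono_ser a (lm F)) (\<lambda>n. one_ser n - E n)"
proof -
  have FS: "F \<in> series_set M" using FL laurent_series_ring_subset_series_set by blast
  define q where "q = lm F"
  define a where "a = F q"
  have a: "a \<noteq> 0" and q_max: "\<And>n. F n \<noteq> 0 \<Longrightarrow> n \<preceq> q"
    using lm_series[OF FS F0] by (auto simp: a_def q_def)
  have "q \<in> M" using series_set_supp_subset[OF FS] a by (auto simp: a_def supp_def)
  then have q: "gpos q" by (rule gpos_M)
  define E where "E v = one_ser v - F (q * v) / a" for v
  have E_nonzero: "v \<noteq> 1 \<and> F (q * v) \<noteq> 0" if "E v \<noteq> 0" for v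
    using that a by (auto simp: E_def one_ser_def mono_ser_def a_def split: if_splits)
  have EL: "E \<in> laurent_series_ring M"
    using a E_nonzero unfolding a_def by (intro laurent_series_ring_rescale[OF FL]) blast+
  have "gsmall (lm E)" if E0: "E \<noteq> (\<lambda>_. 0)"
  proof -
    have ES: "E \<in> series_set M" using EL laurent_series_ring_subset_series_set by blast
    have "E (lm E) \<noteq> 0" by (rule lm_series(1)[OF ES E0])
    then have w: "lm E \<noteq> 1" "F (q * lm E) \<noteq> 0" using E_nonzero by blast+
    have "lm E \<in> M" using series_set_supp_subset[OF ES] \<open>E (lm E) \<noteq> 0\<close> by (auto simp: supp_def)
    moreover have "q * lm E \<preceq> q * 1" using q_max w(2) by simp
    then have "lm E \<preceq> 1" by (rule gle_mult_cancel_left[OF q])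
    ultimately show ?thesis using M_gsmall_iff w(1) by blast
  qed
  moreover have "F = ser_mult (mono_ser a q) (\<lambda>n. one_ser n - E n)"
    by (rule ext) (simp add: ser_mult_mono_ser[OF q] E_def a gpos_mult_inverse_left[OF q])
  ultimately show ?thesis using a EL unfolding q_def by blast
qed

end

section \<open>Fractions of power series\<close>

context hardy_scale
begin

lemma laurent_series_ring_monomial_multiple:
  fixes F :: "germ \<Rightarrow> 'k::comm_ring_1"
  assumes "F \<in> laurent_series_ring M"
  shows "\<exists>Q. Q \<in> power_series_ring M \<and> Q \<noteq> (\<lambda>_. 0) \<and> ser_mult Q F \<in> power_series_ring M"
proof -
  obtain Gs \<Gamma> r where sys: "exponent_system M Gs \<Gamma>"
    and supp: "supp F \<subseteq> monom_on Gs r *o monom_on Gs ` \<Gamma>"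
    using assms by (rule laurent_series_ring_exponent_system)
  have gpos_Gs: "\<And>g. g \<in> Gs \<Longrightarrow> gpos g" using sys by (rule exponent_system_gpos)
  define neg where "neg g = (if g \<in> Gs then max 0 (- r g) else 0)" for g
  define pos where "pos g = (if g \<in> Gs then max 0 (r g) else 0)" for g
  define Q :: "germ \<Rightarrow> 'k" where "Q = mono_ser 1 (monom_on Gs neg)"
  have "Q \<in> power_series_ring M"
  proof (rule power_series_ring_if_supp)
    have "natural_set ((\<lambda>e. e g) ` {neg})" for g
      by (simp, rule natural_set_finite) (auto simp: neg_def)
    moreover have "neg g = 0" if "g \<notin> Gs" for g using that by (simp add: neg_def)
    ultimately show "exponent_system M Gs {neg}"
      using sys unfolding exponent_system_def by auto
    show "supp Q \<subseteq> monom_on Gs ` {neg}" by (auto simp: Q_def supp_def mono_ser_def)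
  qed
  moreover have "Q (monom_on Gs neg) \<noteq> 0" by (simp add: Q_def mono_ser_def)
  then have "Q \<noteq> (\<lambda>_. 0)" by auto
  moreover have "ser_mult Q F \<in> power_series_ring M"
  proof (rule power_series_ring_if_supp)
    show "exponent_system M Gs ((\<lambda>e g. pos g + e g) ` \<Gamma>)"
      by (rule exponent_system_shift[OF sys]) (auto simp: pos_def)
    have "monom_on Gs neg * monom_on Gs r = monom_on Gs (\<lambda>g. neg g + r g)"
      using monom_on_add[of Gs neg r, OF gpos_Gs] by simp
    also have "\<dots> = monom_on Gs pos" by (rule monom_on_cong) (auto simp: neg_def pos_def)
    finally have neg_r: "monom_on Gs neg * monom_on Gs r = monom_on Gs pos" .
    have "supp (ser_mult Q F) \<subseteq> monom_on Gs neg *o supp F"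
      unfolding Q_def by (rule supp_ser_mult_mono_ser[OF gpos_monom_on[OF gpos_Gs]])
    also have "\<dots> \<subseteq> monom_on Gs neg *o (monom_on Gs r *o monom_on Gs ` \<Gamma>)"
      using supp by (rule set_times_mono)
    also have "\<dots> = monom_on Gs ` (\<lambda>e g. pos g + e g) ` \<Gamma>"
      unfolding set_times_rearrange2 neg_r by (rule monom_on_times_image[OF gpos_Gs])
    finally show "supp (ser_mult Q F) \<subseteq> monom_on Gs ` (\<lambda>e g. pos g + e g) ` \<Gamma>" .
  qed
  ultimately show ?thesis by blast
qed

lemma quotient_cofactor:
  assumes "p \<preceq> q" "c * q = 1" "p * v = q * u" "v \<in> M" "u \<in> M"
  shows "u = v * (p * c)" and "u \<preceq> v" and "v \<preceq> u \<Longrightarrow> p = q"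
proof -
  have "u = c * (q * u)" using assms(2) by (simp add: mult.assoc[symmetric])
  then show u: "u = v * (p * c)" using assms(3) by (simp add: ac_simps)
  have "p * c \<preceq> 1" using gle_mult_right[OF assms(1), of c] assms(2) by (simp add: ac_simps)
  then have "v * (p * c) \<preceq> v * 1" by (rule gle_mult[OF gle_refl])
  then show "u \<preceq> v" using u by simp
  assume "v \<preceq> u"
  then have "v * (p * c) = v * 1" using M_gle_antisym[OF assms(5,4) \<open>u \<preceq> v\<close>] u by simp
  then have "p * c = 1" using gpos_mult_left_cancel[OF gpos_M[OF assms(4)]] by blast
  have "p = p * (c * q)" using assms(2) by simp
  also have "\<dots> = q" using \<open>p * c = 1\<close> by (simp add: mult.assoc[symmetric])
  finally show "p = q" .
qed

text \<open>Division by a power series with leading monomial \<open>q\<close>: the largest monomial of \<open>F\<close>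
  outside \<open>c T\<close> would survive in \<open>Q F\<close> with coefficient \<open>Q q F u \<noteq> 0\<close>.\<close>

lemma supp_subset_of_quotient:
  fixes F Q :: "germ \<Rightarrow> 'k::idom"
  assumes F: "F \<in> series_set M" and Q: "Q q \<noteq> 0" "\<And>p. Q p \<noteq> 0 \<Longrightarrow> p \<preceq> q" and c: "c * q = 1"
    and T_mult: "\<And>s t. s \<in> T \<Longrightarrow> t \<in> T \<Longrightarrow> s * t \<in> T"
    and T_P: "supp (ser_mult Q F) \<subseteq> T"
    and T_Q: "\<And>p. Q p \<noteq> 0 \<Longrightarrow> p \<noteq> q \<Longrightarrow> p * c \<in> T"
  shows "supp F \<subseteq> c *o T"
proof (rule ccontr)
  have F_M: "supp F \<subseteq> M" using F by (rule series_set_supp_subset)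
  have c_q: "c * (q * x) = x" for x using c by (simp add: mult.assoc[symmetric])
  assume "\<not> supp F \<subseteq> c *o T"
  then have "supp F - c *o T \<subseteq> supp F" "supp F - c *o T \<noteq> {}" by auto
  then have "\<exists>u\<in>supp F - c *o T. \<forall>v\<in>supp F - c *o T. v \<preceq> u"
    using F unfolding series_set_def is_series_def by blast
  then obtain u where u: "u \<in> supp F" "u \<notin> c *o T"
    and u_max: "\<And>v. v \<in> supp F \<Longrightarrow> v \<notin> c *o T \<Longrightarrow> v \<preceq> u"
    by blast
  have u_M: "u \<in> M" using F_M u(1) by blast
  have unique: "p = q \<and> v = u" if p: "Q p \<noteq> 0" and v: "F v \<noteq> 0" and pv: "p * v = q * u" for p v
  proof -
    have "v \<in> M" using F_M v by (auto simp: supp_def)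
    note cofactor = quotient_cofactor[OF Q(2)[OF p] c pv this u_M]
    have "p = q"
    proof (rule ccontr)
      assume "p \<noteq> q"
      have "v \<notin> c *o T"
      proof
        assume "v \<in> c *o T"
        then obtain t where "t \<in> T" "v = c * t" unfolding elt_set_times_def by blast
        then have "u = c * (t * (p * c))" using cofactor(1) by (simp add: ac_simps)
        moreover have "t * (p * c) \<in> T" using T_mult[OF \<open>t \<in> T\<close> T_Q[OF p \<open>p \<noteq> q\<close>]] .
        ultimately show False using u(2) unfolding elt_set_times_def by blast
      qed
      then have "v \<preceq> u" using u_max v by (simp add: supp_def)
      then show False using cofactor(3) \<open>p \<noteq> q\<close> by blast
    qed
    moreover from this have "c * (q * v) = c * (q * u)" using pv by simp
    then have "v = u" by (simp add: c_q)
    ultimately show ?thesis by blast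
  qed
  have "{(p, v). Q p \<noteq> 0 \<and> F v \<noteq> 0 \<and> p * v = q * u} = {(q, u)}"
    using unique Q(1) u(1) unfolding supp_def by (intro set_eqI) (clarsimp; blast)
  then have "ser_mult Q F (q * u) = Q q * F u" by (simp add: ser_mult_def)
  then have "q * u \<in> T" using T_P Q(1) u(1) by (auto simp: supp_def)
  moreover have "u = c * (q * u)" by (simp add: c_q)
  ultimately have "u \<in> c *o T" unfolding elt_set_times_def by blast
  then show False using u(2) by blast
qed

lemma dickson_small_ratios:
  assumes sys: "exponent_system M Gs \<Gamma>" and q: "q \<in> M"
    and D: "D \<subseteq> \<Gamma>" "\<And>e. e \<in> D \<Longrightarrow> monom_on Gs e \<preceq> q \<and> monom_on Gs e \<noteq> q"
  shows "\<exists>\<Phi>. finite \<Phi> \<and> \<Phi> \<subseteq> D \<and> (\<forall>e\<in>D. \<exists>\<phi>\<in>\<Phi>. \<forall>g\<in>Gs. \<phi> g \<le> e g) \<and>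
    (\<forall>\<phi>\<in>\<Phi>. gsmall (monom_on Gs \<phi> * gpowr q (-1)))"
proof -
  have Gs: "finite Gs" "Gs \<subseteq> M" using sys unfolding exponent_system_def by auto
  have "finite ((\<lambda>e. e g) ` D \<inter> {..<a})" for g a
  proof (rule finite_subset)
    show "finite ((\<lambda>e. e g) ` \<Gamma> \<inter> {..<a})"
      using exponent_system_natural_set[OF sys] by (simp add: natural_set_def)
  qed (use D(1) in auto)
  then obtain \<Phi> where \<Phi>: "\<Phi> \<subseteq> D" "finite \<Phi>" "\<forall>e\<in>D. \<exists>\<phi>\<in>\<Phi>. \<forall>g\<in>Gs. \<phi> g \<le> e g"
    using dickson_lemma[OF Gs(1), of D] by blast
  moreover have "gsmall (monom_on Gs \<phi> * gpowr q (-1))" if "\<phi> \<in> \<Phi>" for \<phi>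
    using that \<Phi>(1) D(2) by (intro M_gsmall_ratio monom_on_in_M Gs(2) q) auto
  ultimately show ?thesis by blast
qed

lemma common_exponent_system:
  assumes sys1: "exponent_system M Gs1 \<Gamma>1" and sys2: "exponent_system M Gs2 \<Gamma>2"
    and q: "q = monom_on Gs1 \<beta>"
    and D: "D \<subseteq> \<Gamma>1" "\<And>e. e \<in> D \<Longrightarrow> monom_on Gs1 e \<preceq> q \<and> monom_on Gs1 e \<noteq> q"
  shows "\<exists>Gs \<Gamma> r. exponent_system M Gs \<Gamma> \<and> (\<forall>e\<in>\<Gamma>. \<forall>d\<in>\<Gamma>. (\<lambda>g. e g + d g) \<in> \<Gamma>) \<and>
    monom_on Gs2 ` \<Gamma>2 \<subseteq> monom_on Gs ` \<Gamma> \<and>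
    (\<forall>e\<in>D. monom_on Gs1 e * gpowr q (-1) \<in> monom_on Gs ` \<Gamma>) \<and> monom_on Gs r = gpowr q (-1)"
proof -
  have Gs1: "finite Gs1" "Gs1 \<noteq> {}" "Gs1 \<subseteq> M" "\<And>g. g \<in> Gs1 \<Longrightarrow> gsmall g"
    and Gs2: "finite Gs2" "Gs2 \<subseteq> M" "\<And>g. g \<in> Gs2 \<Longrightarrow> gsmall g"
    using sys1 sys2 unfolding exponent_system_def by auto
  have q_M: "q \<in> M" using q Gs1(3) by (simp add: monom_on_in_M)
  obtain \<Phi> where \<Phi>: "finite \<Phi>" "\<Phi> \<subseteq> D" "\<forall>e\<in>D. \<exists>\<phi>\<in>\<Phi>. \<forall>g\<in>Gs1. \<phi> g \<le> e g"
    and small: "\<forall>\<phi>\<in>\<Phi>. gsmall (monom_on Gs1 \<phi> * gpowr q (-1))"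
    using dickson_small_ratios[OF sys1 q_M D] by blast
  define ratio where "ratio \<phi> = monom_on Gs1 \<phi> * gpowr q (-1)" for \<phi>
  have ratio: "ratio \<phi> \<in> M \<and> gsmall (ratio \<phi>)" if "\<phi> \<in> \<Phi>" for \<phi>
    unfolding ratio_def using Gs1(3) q_M small that by (auto intro: mult_in_M monom_on_in_M gpowr_in_M)
  define Gs where "Gs = Gs1 \<union> Gs2 \<union> ratio ` \<Phi>"
  define A where "A g = (\<lambda>e. e g) ` \<Gamma>2 \<union> (\<Union>\<phi>\<in>\<Phi>. (+) (- \<phi> g) ` (\<lambda>e. e g) ` \<Gamma>1 \<inter> {0..}) \<union> {1}" for g
  have Gs: "finite Gs" "Gs \<subseteq> M" "\<And>g. g \<in> Gs \<Longrightarrow> gpos g"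
    using Gs1 Gs2 \<Phi>(1) ratio gpos_M unfolding Gs_def by auto
  have "exponent_system M Gs (generated_exponents Gs A)"
  proof (rule exponent_system_generated_exponents)
    fix g
    have "natural_set (\<Union>\<phi>\<in>\<Phi>. (+) (- \<phi> g) ` (\<lambda>e. e g) ` \<Gamma>1 \<inter> {0..})"
      using \<Phi>(1) exponent_system_natural_set[OF sys1] by (intro natural_set_UN natural_set_translate)
    moreover have "natural_set {1}" by (rule natural_set_finite) auto
    ultimately show "natural_set (A g)"
      unfolding A_def using exponent_system_natural_set[OF sys2] by (intro natural_set_Un)
  qed (use Gs Gs1 Gs2 ratio in \<open>auto simp: Gs_def\<close>)
  moreover have "\<forall>e\<in>generated_exponents Gs A. \<forall>d\<in>generated_exponents Gs A.
      (\<lambda>g. e g + d g) \<in> generated_exponents Gs A"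
    using generated_exponents_add by blast
  moreover have "monom_on Gs2 ` \<Gamma>2 \<subseteq> monom_on Gs ` generated_exponents Gs A"
    using sys2 Gs by (auto simp: exponent_system_def Gs_def A_def intro!: monom_on_in_generated_exponents)
  moreover have "\<forall>e\<in>D. monom_on Gs1 e * gpowr q (-1) \<in> monom_on Gs ` generated_exponents Gs A"
  proof
    fix e assume "e \<in> D"
    obtain \<phi> where \<phi>: "\<phi> \<in> \<Phi>" "\<forall>g\<in>Gs1. \<phi> g \<le> e g" using \<Phi>(3) \<open>e \<in> D\<close> by blast
    have "e g - \<phi> g \<in> A g" if "g \<in> Gs1" for g
      using \<phi> that \<open>e \<in> D\<close> D(1) unfolding A_def by force
    then show "monom_on Gs1 e * gpowr q (-1) \<in> monom_on Gs ` generated_exponents Gs A"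
      using \<phi> Gs by (intro monom_on_quotient_in_generated_exponents) (auto simp: Gs_def A_def ratio_def)
  qed
  moreover have "monom_on Gs (\<lambda>g. if g \<in> Gs1 then - \<beta> g else 0) = gpowr q (-1)"
    unfolding q using Gs by (intro monom_on_extend_inverse) (auto simp: Gs_def)
  ultimately show ?thesis by blast
qed

lemma laurent_series_ring_if_quotient:
  fixes F :: "germ \<Rightarrow> 'k::idom"
  assumes F: "F \<in> series_set M" and P: "P \<in> power_series_ring M"
    and Q: "Q \<in> power_series_ring M" "Q \<noteq> (\<lambda>_. 0)" and QF: "ser_mult Q F = P"
  shows "F \<in> laurent_series_ring M"
proof -
  obtain Gs1 \<Gamma>1 where sys1: "exponent_system M Gs1 \<Gamma>1" and supp_Q: "supp Q \<subseteq> monom_on Gs1 ` \<Gamma>1"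
    using Q(1) by (rule power_series_ring_exponent_system)
  obtain Gs2 \<Gamma>2 where sys2: "exponent_system M Gs2 \<Gamma>2" and supp_P: "supp P \<subseteq> monom_on Gs2 ` \<Gamma>2"
    using P by (rule power_series_ring_exponent_system)
  have "Q \<in> series_set M" using Q(1) power_series_ring_subset_series_set by blast
  define q where "q = lm Q"
  have q: "Q q \<noteq> 0" "\<And>p. Q p \<noteq> 0 \<Longrightarrow> p \<preceq> q"
    using lm_series[OF \<open>Q \<in> series_set M\<close> Q(2)] by (auto simp: q_def)
  obtain \<beta> where \<beta>: "q = monom_on Gs1 \<beta>" using supp_Q q(1) unfolding supp_def by blast
  define D where "D = {e \<in> \<Gamma>1. Q (monom_on Gs1 e) \<noteq> 0 \<and> monom_on Gs1 e \<noteq> q}"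
  have D: "D \<subseteq> \<Gamma>1" "\<And>e. e \<in> D \<Longrightarrow> monom_on Gs1 e \<preceq> q \<and> monom_on Gs1 e \<noteq> q"
    using q(2) unfolding D_def by blast+
  obtain Gs \<Gamma> r where sys: "exponent_system M Gs \<Gamma>"
    and add: "\<forall>e\<in>\<Gamma>. \<forall>d\<in>\<Gamma>. (\<lambda>g. e g + d g) \<in> \<Gamma>"
    and P_in: "monom_on Gs2 ` \<Gamma>2 \<subseteq> monom_on Gs ` \<Gamma>"
    and D_in: "\<forall>e\<in>D. monom_on Gs1 e * gpowr q (-1) \<in> monom_on Gs ` \<Gamma>"
    and r: "monom_on Gs r = gpowr q (-1)"
    using common_exponent_system[OF sys1 sys2 \<beta> D] by blast
  have "supp F \<subseteq> gpowr q (-1) *o monom_on Gs ` \<Gamma>"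
  proof (rule supp_subset_of_quotient[of F Q q "gpowr q (-1)" "monom_on Gs ` \<Gamma>", OF F q])
    have "supp Q \<subseteq> M" using \<open>Q \<in> series_set M\<close> by (rule series_set_supp_subset)
    then have "gpos q" using q(1) by (intro gpos_M) (auto simp: supp_def)
    then show "gpowr q (-1) * q = 1" by (simp add: mult.commute mult_gpowr_minus_one)
    show "s * t \<in> monom_on Gs ` \<Gamma>" if "s \<in> monom_on Gs ` \<Gamma>" "t \<in> monom_on Gs ` \<Gamma>" for s t
      using add that by (intro monom_on_image_mult_closed[OF exponent_system_gpos[OF sys]]) blast+
    show "supp (ser_mult Q F) \<subseteq> monom_on Gs ` \<Gamma>" using QF supp_P P_in by blast
    show "p * gpowr q (-1) \<in> monom_on Gs ` \<Gamma>" if p: "Q p \<noteq> 0" "p \<noteq> q" for p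
    proof -
      obtain e where "e \<in> \<Gamma>1" "p = monom_on Gs1 e" using p(1) supp_Q unfolding supp_def by blast
      then have "e \<in> D" using p unfolding D_def by blast
      then show ?thesis using D_in \<open>p = monom_on Gs1 e\<close> by blast
    qed
  qed
  then show ?thesis unfolding r[symmetric] by (rule laurent_series_ring_if_supp[OF sys])
qed

lemma laurent_series_ring_eq_quotients:
  "(laurent_series_ring M :: (germ \<Rightarrow> 'k::idom) set) =
    {F \<in> series_set M. \<exists>P Q. P \<in> power_series_ring M \<and> Q \<in> power_series_ring M \<and>
       Q \<noteq> (\<lambda>_. 0) \<and> ser_mult Q F = P}"
  using laurent_series_ring_subset_series_set laurent_series_ring_monomial_multiple
    laurent_series_ring_if_quotient
  by blast

end

theorem proposition5p11:
  fixes M :: "germ set"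
  assumes "mult_R_subspace M" and "asymptotic_scale M"
  shows "(\<forall>F :: germ \<Rightarrow> 'k::field_char_0. F \<in> laurent_series_ring M \<and> F \<noteq> (\<lambda>_. 0) \<longrightarrow>
            (\<exists>a E. a \<noteq> 0 \<and> E \<in> laurent_series_ring M \<and> (E = (\<lambda>_. 0) \<or> gsmall (lm E)) \<and>
                   F = ser_mult (mono_ser a (lm F)) (\<lambda>n. one_ser n - E n)))
       \<and> (laurent_series_ring M :: (germ \<Rightarrow> 'k) set) =
           {F \<in> series_set M. \<exists>P Q. P \<in> power_series_ring M \<and> Q \<in> power_series_ring M \<and>
                Q \<noteq> (\<lambda>_. 0) \<and> ser_mult Q F = P}"
proof -
  interpret hardy_scale M using assms by unfold_locales
  show ?thesis
    by (intro conjI allI impI laurent_series_ring_eq_quotients)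
      (use laurent_series_leading_term in blast)
qed

end
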